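(* Let $\mathcal{H}_A,\mathcal{H}_B$ be finite-dimensional Hilbert spaces with fixed reference bases $\{|i\rangle_A\}$ and $\{|j\rangle_B\}$, and equip $\mathcal{H}_A\otimes\mathcal{H}_B$ with the product reference basis. For every state $\rho_{AB}$ with reduced states $\rho_A,\rho_B$, $$C^{A|B}_a(\rho_{AB})\leq C_a(\rho_A)+E_a(\rho_{AB}),\qquad C_a(\rho_{AB})\leq C^{A|B}_a(\rho_{AB})+C_a(\rho_B),$$ $$C_a(\rho_{AB})\leq C_a(\rho_A)+C_a(\rho_B)+E_a(\rho_{AB}).$$
   Context: $S$ denotes von Neumann entropy. For a system with reference basis $\{|k\rangle\}$, $\Delta(\rho)=\sum_k|k\rangle\langle k|\rho|k\rangle\langle k|$. The coherence of assistance is $C_a(\rho)=\max\sum_ip_iS(\Delta(|\psi_i\rangle\langle\psi_i|))$, the maximum over all pure-state decompositions $\rho=\sum_ip_i|\psi_i\rangle\langle\psi_i|$ (for bipartite states $\Delta$ is with respect to the product basis). With $\Delta_A=\Delta\otimes\mathrm{id}_B$ dephasing only system $A$ in its basis, the IQ coherence of assistance is $C^{A|B}_a(\rho_{AB})=\max\sum_ip_iS(\Delta_A(|\psi_i\rangle\langle\psi_i|_{AB}))$ over all pure-state decompositions $\rho_{AB}=\sum_ip_i|\psi_i\rangle\langle\psi_i|_{AB}$. The entanglement of assistance is $E_a(\rho_{AB})=\max\sum_ip_iS(\mathrm{Tr}_A|\psi_i\rangle\langle\psi_i|_{AB})$ over all pure-state decompositions of $\rho_{AB}$. *)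

theory Defs
  imports "Jordan_Normal_Form.Char_Poly" "HOL-Computational_Algebra.Polynomial"
begin

text \<open>A Hilbert space of dimension n is complex n-vectors (JNF type complex vec), with the
standard basis as reference basis. The bipartite space H_A (x) H_B of dimensions dA, dB is
identified with dimension dA*dB, the product basis vector |i>|j> having index i*dB+j.\<close>

definition density_op :: "nat \<Rightarrow> complex mat \<Rightarrow> bool" where
  "density_op n \<rho> \<longleftrightarrow> \<rho> \<in> carrier_mat n n
     \<and> (\<forall>i<n. \<forall>j<n. \<rho> $$ (j, i) = cnj (\<rho> $$ (i, j)))
     \<and> (\<forall>v \<in> carrier_vec n. 0 \<le> (\<Sum>i<n. \<Sum>j<n. cnj (v $ i) * \<rho> $$ (i, j) * v $ j))
     \<and> (\<Sum>i<n. \<rho> $$ (i, i)) = 1"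

definition unit_vec_c :: "nat \<Rightarrow> complex vec \<Rightarrow> bool" where
  "unit_vec_c n \<psi> \<longleftrightarrow> \<psi> \<in> carrier_vec n \<and> (\<Sum>i<n. (cmod (\<psi> $ i))\<^sup>2) = 1"

definition proj :: "complex vec \<Rightarrow> complex mat" where
  "proj \<psi> = mat (dim_vec \<psi>) (dim_vec \<psi>) (\<lambda>(i, j). \<psi> $ i * cnj (\<psi> $ j))"

definition pure_decomp :: "nat \<Rightarrow> complex mat \<Rightarrow> (real \<times> complex vec) list \<Rightarrow> bool" where
  "pure_decomp n \<rho> L \<longleftrightarrow>
     (\<forall>(p, \<psi>) \<in> set L. 0 \<le> p \<and> unit_vec_c n \<psi>)
     \<and> (\<Sum>k<length L. fst (L ! k)) = 1
     \<and> \<rho> = mat n n (\<lambda>(i, j). \<Sum>k<length L. complex_of_real (fst (L ! k)) * proj (snd (L ! k)) $$ (i, j))"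

definition eta :: "real \<Rightarrow> real" where
  "eta x = (if x \<le> 0 then 0 else - x * log 2 x)"

definition vN_entropy :: "complex mat \<Rightarrow> real" where
  "vN_entropy \<rho> = (\<Sum>x \<in> {x. poly (char_poly \<rho>) x = 0}.
                      real (order x (char_poly \<rho>)) * eta (Re x))"

definition dephase :: "complex mat \<Rightarrow> complex mat" where
  "dephase \<rho> = mat (dim_row \<rho>) (dim_col \<rho>) (\<lambda>(i, j). if i = j then \<rho> $$ (i, j) else 0)"

text \<open>Delta_A = Delta (x) id_B: dephase only the A index (index k ~ (k div dB, k mod dB)).\<close>
definition dephase_A :: "nat \<Rightarrow> nat \<Rightarrow> complex mat \<Rightarrow> complex mat" where
  "dephase_A dA dB \<rho> = mat (dA * dB) (dA * dB)
     (\<lambda>(k, l). if k div dB = l div dB then \<rho> $$ (k, l) else 0)"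

definition ptrace_A :: "nat \<Rightarrow> nat \<Rightarrow> complex mat \<Rightarrow> complex mat" where
  "ptrace_A dA dB \<rho> = mat dB dB (\<lambda>(j, j'). \<Sum>i<dA. \<rho> $$ (i * dB + j, i * dB + j'))"

definition ptrace_B :: "nat \<Rightarrow> nat \<Rightarrow> complex mat \<Rightarrow> complex mat" where
  "ptrace_B dA dB \<rho> = mat dA dA (\<lambda>(i, i'). \<Sum>j<dB. \<rho> $$ (i * dB + j, i' * dB + j))"

definition coh_assist :: "nat \<Rightarrow> complex mat \<Rightarrow> real" where
  "coh_assist n \<rho> = (SUP L \<in> {L. pure_decomp n \<rho> L}.
      \<Sum>k<length L. fst (L ! k) * vN_entropy (dephase (proj (snd (L ! k)))))"

definition IQ_coh_assist :: "nat \<Rightarrow> nat \<Rightarrow> complex mat \<Rightarrow> real" where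
  "IQ_coh_assist dA dB \<rho> = (SUP L \<in> {L. pure_decomp (dA * dB) \<rho> L}.
      \<Sum>k<length L. fst (L ! k) * vN_entropy (dephase_A dA dB (proj (snd (L ! k)))))"

definition ent_assist :: "nat \<Rightarrow> nat \<Rightarrow> complex mat \<Rightarrow> real" where
  "ent_assist dA dB \<rho> = (SUP L \<in> {L. pure_decomp (dA * dB) \<rho> L}.
      \<Sum>k<length L. fst (L ! k) * vN_entropy (ptrace_A dA dB (proj (snd (L ! k)))))"

end

theory Submission
  imports Defs "Jordan_Normal_Form.Schur_Decomposition"
begin

text \<open>Fix a pure state psi of AB and let rho_A = sum_m p_m |u_m><u_m| be the spectral
  decomposition of its reduced state on A. The distribution of the A-index of psi is the
  p-mixture of the distributions |u_m|^2, so the entropy bound for mixtures gives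
  S(Delta_A psi) \<le> sum_m p_m S(Delta u_m) + H(p), where H(p) = S(rho_A) = S(rho_B) is the
  entanglement of psi. By the chain rule of the Shannon entropy,
  S(Delta psi) = S(Delta_A psi) + sum_i q_i S(Delta phi_i), where q is the distribution of
  the A-index and the phi_i are the corresponding conditional states of B, which decompose
  rho_B. Applying this to every member of a decomposition of rho_AB, the pieces obtained
  form, by linearity of the partial traces, decompositions of the reduced states of rho_AB;
  taking suprema gives the first two inequalities, and the third is their sum.\<close>

lemma mat_adjoint_dim[simp]:
  "dim_row (mat_adjoint A) = dim_col A" "dim_col (mat_adjoint A) = dim_row A"
  by (simp_all add: mat_adjoint_def)

lemma mat_adjoint_carrier[simp]: "A \<in> carrier_mat m n \<Longrightarrow> mat_adjoint A \<in> carrier_mat n m"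
  unfolding carrier_mat_def by simp

lemma mat_adjoint_index[simp]:
  "i < dim_col A \<Longrightarrow> j < dim_row A \<Longrightarrow> mat_adjoint A $$ (i, j) = conjugate (A $$ (j, i))"
  unfolding mat_adjoint_def by (simp add: mat_of_rows_index)

lemma mat_adjoint_adjoint[simp]: "mat_adjoint (mat_adjoint A) = A"
  by (rule eq_matI) auto

lemma mat_adjoint_mult:
  fixes A B :: "'a :: conjugatable_field mat"
  assumes "A \<in> carrier_mat m n" "B \<in> carrier_mat n k"
  shows "mat_adjoint (A * B) = mat_adjoint B * mat_adjoint A"
  by (rule eq_matI)
    (use assms in \<open>auto simp: scalar_prod_def sum_conjugate conjugate_dist_mul mult.commute intro!: sum.cong\<close>)

lemma mat_adjoint_one_block:
  "A \<in> carrier_mat m m \<Longrightarrow>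
   mat_adjoint (four_block_mat (1\<^sub>m 1) (0\<^sub>m 1 m) (0\<^sub>m m 1) A)
     = four_block_mat (1\<^sub>m 1) (0\<^sub>m 1 m) (0\<^sub>m m 1) (mat_adjoint (A :: complex mat))"
  by (rule eq_matI) auto

definition unitary_mat :: "nat \<Rightarrow> 'a :: conjugatable_field mat \<Rightarrow> bool" where
  "unitary_mat n U \<longleftrightarrow> U \<in> carrier_mat n n \<and> mat_adjoint U * U = 1\<^sub>m n"

lemma unitary_mat_carrier: "unitary_mat n U \<Longrightarrow> U \<in> carrier_mat n n"
  by (simp add: unitary_mat_def)

lemma unitary_mat_left_inverse: "unitary_mat n U \<Longrightarrow> mat_adjoint U * U = 1\<^sub>m n"
  by (simp add: unitary_mat_def)

lemma unitary_mat_right_inverse: "unitary_mat n U \<Longrightarrow> U * mat_adjoint U = 1\<^sub>m n"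
  unfolding unitary_mat_def using mat_mult_left_right_inverse[of "mat_adjoint U" n U] by auto

lemma unitary_mat_mult:
  assumes U: "unitary_mat n U" and V: "unitary_mat n V"
  shows "unitary_mat n (U * V)"
proof -
  note carr = unitary_mat_carrier[OF U] unitary_mat_carrier[OF V]
  have "mat_adjoint (U * V) * (U * V) = mat_adjoint V * ((mat_adjoint U * U) * V)"
    using carr by (simp add: mat_adjoint_mult assoc_mult_mat[of _ n n _ n _ n])
  also have "\<dots> = 1\<^sub>m n"
    unfolding unitary_mat_left_inverse[OF U] left_mult_one_mat[OF carr(2)]
    by (rule unitary_mat_left_inverse[OF V])
  finally show ?thesis
    unfolding unitary_mat_def using mult_carrier_mat[OF carr] by (rule conjI[rotated])
qed

lemma unitary_mat_one_block:
  assumes "unitary_mat m U"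
  shows "unitary_mat (Suc m) (four_block_mat (1\<^sub>m 1) (0\<^sub>m 1 m) (0\<^sub>m m 1) (U :: complex mat))"
proof -
  have U: "U \<in> carrier_mat m m"
    using assms by (rule unitary_mat_carrier)
  have "mat_adjoint (four_block_mat (1\<^sub>m 1) (0\<^sub>m 1 m) (0\<^sub>m m 1) U)
          * four_block_mat (1\<^sub>m 1) (0\<^sub>m 1 m) (0\<^sub>m m 1) U
        = four_block_mat (1\<^sub>m 1) (0\<^sub>m 1 m) (0\<^sub>m m 1) (mat_adjoint U * U)"
    unfolding mat_adjoint_one_block[OF U] by (subst mult_four_block_mat) (use U in auto)
  also have "\<dots> = 1\<^sub>m (Suc m)"
    using unitary_mat_left_inverse[OF assms] by simp
  moreover have "four_block_mat (1\<^sub>m 1) (0\<^sub>m 1 m) (0\<^sub>m m 1) U \<in> carrier_mat (Suc m) (Suc m)"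
    using four_block_carrier_mat[OF one_carrier_mat[of 1] U, of "0\<^sub>m 1 m" "0\<^sub>m m 1"] by simp
  ultimately show ?thesis
    by (simp add: unitary_mat_def)
qed

lemma unitary_mat_similar:
  assumes "unitary_mat n U" "D \<in> carrier_mat n n"
  shows "similar_mat (U * D * mat_adjoint U) D"
proof (rule similar_matI[where n = n and P = U and Q = "mat_adjoint U"])
  show "{U * D * mat_adjoint U, D, U, mat_adjoint U} \<subseteq> carrier_mat n n"
    using unitary_mat_carrier[OF assms(1)] assms(2) by auto
qed (use assms unitary_mat_left_inverse unitary_mat_right_inverse in auto)

lemma unitary_mat_conj_trans:
  assumes W: "unitary_mat n W" and V: "unitary_mat n V" and D: "D \<in> carrier_mat n n"
    and "A = W * B * mat_adjoint W" "B = V * D * mat_adjoint V"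
  shows "A = (W * V) * D * mat_adjoint (W * V)"
proof -
  note carr = unitary_mat_carrier[OF W] unitary_mat_carrier[OF V]
  have VD: "V * D \<in> carrier_mat n n" and VW: "mat_adjoint V * mat_adjoint W \<in> carrier_mat n n"
    using carr D by auto
  have "W * (V * D * mat_adjoint V) * mat_adjoint W = W * V * D * (mat_adjoint V * mat_adjoint W)"
    using carr D VD VW by (simp add: assoc_mult_mat[of _ n n _ n _ n])
  then show ?thesis
    using assms(4,5) carr by (simp add: mat_adjoint_mult)
qed

lemma cnj_mult_self_eq: "cnj z * z = complex_of_real ((cmod z)\<^sup>2)"
  by (metis complex_norm_square mult.commute)

lemma unitary_mat_col_norm:
  assumes "unitary_mat n U" "m < n"
  shows "(\<Sum>i<n. (cmod (U $$ (i, m)))\<^sup>2) = 1"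
proof -
  have U: "U \<in> carrier_mat n n"
    using assms(1) by (rule unitary_mat_carrier)
  have "(\<Sum>i<n. complex_of_real ((cmod (U $$ (i, m)))\<^sup>2)) = (mat_adjoint U * U) $$ (m, m)"
    using U assms(2) by (simp add: scalar_prod_def atLeast0LessThan cnj_mult_self_eq)
  also have "\<dots> = 1"
    using unitary_mat_left_inverse[OF assms(1)] assms(2) by simp
  finally show ?thesis
    by (metis of_real_eq_1_iff of_real_sum)
qed

lemma corthogonal_normalize_unitary:
  fixes ws :: "complex vec list"
  assumes ws: "set ws \<subseteq> carrier_vec n" "corthogonal ws" "length ws = n"
  shows "\<exists>W. unitary_mat n W \<and> (\<forall>j<n. \<exists>c. c \<noteq> 0 \<and> col W j = c \<cdot>\<^sub>v ws ! j)"
proof -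
  define s where "s j = sqrt (Re (ws ! j \<bullet>c ws ! j))" for j
  have norm: "ws ! j \<bullet>c ws ! j = complex_of_real (s j) * complex_of_real (s j) \<and> s j > 0"
    if j: "j < n" for j
  proof -
    have "ws ! j \<bullet>c ws ! j \<noteq> 0" using corthogonalD[OF ws(2), of j j] ws(3) j by simp
    moreover have "Im (ws ! j \<bullet>c ws ! j) = 0" "Re (ws ! j \<bullet>c ws ! j) \<ge> 0"
      using conjugate_square_ge_0_vec[of "ws ! j"] by (auto simp: less_eq_complex_def)
    ultimately show ?thesis unfolding s_def
      by (auto simp: complex_eq_iff simp flip: of_real_mult)
  qed
  define W where "W = mat n n (\<lambda>(i, j). ws ! j $ i / complex_of_real (s j))"
  have Wc: "W \<in> carrier_mat n n" by (simp add: W_def)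
  have "mat_adjoint W * W = 1\<^sub>m n"
  proof (rule eq_matI)
    fix i j assume "i < dim_row (1\<^sub>m n :: complex mat)" "j < dim_col (1\<^sub>m n :: complex mat)"
    then have i: "i < n" and j: "j < n" by auto
    have wsc: "ws ! i \<in> carrier_vec n" "ws ! j \<in> carrier_vec n"
      using ws i j by auto
    have "(mat_adjoint W * W) $$ (i, j)
        = ws ! j \<bullet>c ws ! i / (complex_of_real (s i) * complex_of_real (s j))"
      using i j Wc wsc
      by (simp add: scalar_prod_def W_def sum_divide_distrib atLeast0LessThan mult_ac)
    also have "\<dots> = 1\<^sub>m n $$ (i, j)"
      using norm[OF i] corthogonalD[OF ws(2), of j i] ws(3) i j by (cases "i = j") auto
    finally show "(mat_adjoint W * W) $$ (i, j) = 1\<^sub>m n $$ (i, j)" .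
  qed (use Wc in auto)
  moreover have "col W j = (1 / complex_of_real (s j)) \<cdot>\<^sub>v ws ! j \<and> 1 / complex_of_real (s j) \<noteq> 0"
    if "j < n" for j
  proof -
    have "ws ! j \<in> carrier_vec n"
      using ws that by auto
    then show ?thesis
      using that norm[OF that] by (auto simp: W_def)
  qed
  ultimately show ?thesis
    using Wc unfolding unitary_mat_def by blast
qed

lemma unitary_completion:
  fixes v :: "complex vec"
  assumes v: "v \<in> carrier_vec n" and v0: "v \<noteq> 0\<^sub>v n"
  shows "\<exists>W c. unitary_mat n W \<and> c \<noteq> 0 \<and> col W 0 = c \<cdot>\<^sub>v v"
proof -
  interpret cof_vec_space n "TYPE(complex)" .
  define b where "b = basis_completion v"
  define ws where "ws = gram_schmidt n b"
  from basis_completion[OF v v0, folded b_def]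
  have dist_b: "distinct b" and indep: "\<not> lin_dep (set b)" and b: "set b \<subseteq> carrier_vec n"
    and hdb: "hd b = v" and len_b: "length b = n" by auto
  have n0: "n \<noteq> 0" using v v0 by auto
  from hdb len_b n0 obtain vs where bv: "b = v # vs" by (cases b, auto)
  from gram_schmidt_result[OF b dist_b indep refl, folded ws_def]
  have ws: "set ws \<subseteq> carrier_vec n" "corthogonal ws" "length ws = n"
    by (auto simp: len_b)
  from gram_schmidt_hd[OF v, of vs, folded bv] have "hd ws = v" unfolding ws_def .
  then have "ws ! 0 = v" using ws(3) n0 by (cases ws, auto)
  then show ?thesis
    using corthogonal_normalize_unitary[OF ws] n0 by auto
qed

section \<open>The spectral theorem for Hermitian matrices\<close>

lemma unitary_mat_conj_cancel:
  assumes W: "unitary_mat n W" and A: "A \<in> carrier_mat n n"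
  shows "A = W * (mat_adjoint W * A * W) * mat_adjoint W"
proof -
  have Wc: "W \<in> carrier_mat n n" "mat_adjoint W \<in> carrier_mat n n"
    using unitary_mat_carrier[OF W] by auto
  have AW: "A * W \<in> carrier_mat n n" using A Wc by (meson mult_carrier_mat)
  have "W * (mat_adjoint W * A * W) * mat_adjoint W = ((W * mat_adjoint W) * (A * W)) * mat_adjoint W"
    using assoc_mult_mat[OF Wc(2) A Wc(1)] assoc_mult_mat[OF Wc(1) Wc(2) AW] by simp
  also have "\<dots> = A"
    using unitary_mat_right_inverse[OF W] AW A Wc assoc_mult_mat[OF A Wc(1) Wc(2)] by simp
  finally show ?thesis ..
qed

lemma mat_adjoint_conj:
  fixes A W :: "'a :: conjugatable_field mat"
  assumes "A \<in> carrier_mat n n" "W \<in> carrier_mat n k"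
  shows "mat_adjoint (mat_adjoint W * A * W) = mat_adjoint W * mat_adjoint A * W"
proof -
  have WA: "mat_adjoint W * A \<in> carrier_mat k n"
    using assms by (meson mat_adjoint_carrier mult_carrier_mat)
  have "mat_adjoint (mat_adjoint W * A * W) = mat_adjoint W * (mat_adjoint A * W)"
    using mat_adjoint_mult[OF WA assms(2)] mat_adjoint_mult[OF mat_adjoint_carrier[OF assms(2)] assms(1)]
    by simp
  then show ?thesis
    using assms by (simp add: assoc_mult_mat[of _ k n _ n _ k])
qed

lemma unitary_conj_eigenvector_col:
  fixes A :: "complex mat"
  assumes W: "unitary_mat n W" and A: "A \<in> carrier_mat n n"
    and v: "col W 0 = c \<cdot>\<^sub>v v" "v \<in> carrier_vec n" "A *\<^sub>v v = e \<cdot>\<^sub>v v" and i: "i < n"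
  shows "(mat_adjoint W * A * W) $$ (i, 0) = (if i = 0 then e else 0)"
proof -
  have Wc: "W \<in> carrier_mat n n" "mat_adjoint W \<in> carrier_mat n n"
    using unitary_mat_carrier[OF W] by auto
  have "col (A * W) 0 = e \<cdot>\<^sub>v col W 0"
    using v A i col_mult2[OF A Wc(1), of 0] by (simp add: mult_mat_vec smult_smult_assoc mult.commute)
  then have "(mat_adjoint W * A * W) $$ (i, 0) = e * (row (mat_adjoint W) i \<bullet> col W 0)"
    using i Wc A by (simp add: assoc_mult_mat[OF Wc(2) A Wc(1)] scalar_prod_smult_distrib[of _ n])
  also have "row (mat_adjoint W) i \<bullet> col W 0 = (mat_adjoint W * W) $$ (i, 0)"
    using Wc i by simp
  finally show ?thesis
    using unitary_mat_left_inverse[OF W] i by simp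
qed

lemma hermitian_first_col_block:
  fixes B :: "complex mat"
  assumes B: "B \<in> carrier_mat (Suc m) (Suc m)" and herm: "mat_adjoint B = B"
    and col0: "\<And>i. i < Suc m \<Longrightarrow> B $$ (i, 0) = (if i = 0 then e else 0)"
  defines "B3 \<equiv> mat m m (\<lambda>(i, j). B $$ (Suc i, Suc j))"
  shows "B = four_block_mat (mat 1 1 (\<lambda>_. e)) (0\<^sub>m 1 m) (0\<^sub>m m 1) B3" "mat_adjoint B3 = B3"
proof -
  have entry: "B $$ (j, i) = cnj (B $$ (i, j))" if "i < Suc m" "j < Suc m" for i j
    using arg_cong[OF herm, of "\<lambda>M. M $$ (j, i)"] B that by simp
  have B00: "B $$ (0, 0) = e"
    using col0[of 0] by simp
  have e_real: "cnj e = e"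
    using entry[of 0 0] unfolding B00 by simp
  have row0: "B $$ (0, j) = (if j = 0 then e else 0)" if "j < Suc m" for j
  proof -
    have "B $$ (0, j) = cnj (B $$ (j, 0))"
      using entry[of j 0] that by simp
    then show ?thesis
      using col0[OF that] e_real by simp
  qed
  show "B = four_block_mat (mat 1 1 (\<lambda>_. e)) (0\<^sub>m 1 m) (0\<^sub>m m 1) B3"
  proof (rule eq_matI)
    fix i j
    assume "i < dim_row (four_block_mat (mat 1 1 (\<lambda>_. e)) (0\<^sub>m 1 m) (0\<^sub>m m 1) B3)"
      "j < dim_col (four_block_mat (mat 1 1 (\<lambda>_. e)) (0\<^sub>m 1 m) (0\<^sub>m m 1) B3)"
    then have ij: "i < Suc m" "j < Suc m" by (auto simp: B3_def)
    show "B $$ (i, j) = four_block_mat (mat 1 1 (\<lambda>_. e)) (0\<^sub>m 1 m) (0\<^sub>m m 1) B3 $$ (i, j)"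
      using ij col0 row0 by (cases i; cases j) (auto simp: B3_def)
  qed (use B in \<open>auto simp: B3_def\<close>)
  show "mat_adjoint B3 = B3"
  proof (rule eq_matI)
    fix i j assume "i < dim_row B3" "j < dim_col B3"
    then show "mat_adjoint B3 $$ (i, j) = B3 $$ (i, j)"
      using entry[of "Suc j" "Suc i"] by (simp add: B3_def)
  qed (auto simp: B3_def)
qed

text \<open>Deflation: conjugating by a unitary whose first column is an eigenvector splits off
  a 1x1 block, and hermiticity forces the rest of the first row to vanish as well.\<close>

lemma hermitian_deflation:
  fixes A :: "complex mat"
  assumes A: "A \<in> carrier_mat (Suc m) (Suc m)" and herm: "mat_adjoint A = A"
  shows "\<exists>W e A3. unitary_mat (Suc m) W \<and> A3 \<in> carrier_mat m m \<and> mat_adjoint A3 = A3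
    \<and> A = W * four_block_mat (mat 1 1 (\<lambda>_. e)) (0\<^sub>m 1 m) (0\<^sub>m m 1) A3 * mat_adjoint W"
proof -
  obtain as where "char_poly A = (\<Prod>a\<leftarrow>as. [:- a, 1:])" "length as = Suc m"
    using char_poly_factorized[OF A] by blast
  then obtain e as' where "char_poly A = [:- e, 1:] * (\<Prod>a\<leftarrow>as'. [:- a, 1:])"
    by (cases as) auto
  then have "eigenvector A (find_eigenvector A e) e"
    using eigenvalue_root_char_poly[OF A] find_eigenvector[OF A] by simp
  then obtain v where v: "v \<in> carrier_vec (Suc m)" "v \<noteq> 0\<^sub>v (Suc m)" "A *\<^sub>v v = e \<cdot>\<^sub>v v"
    using A unfolding eigenvector_def by auto
  obtain W c where W: "unitary_mat (Suc m) W" "col W 0 = c \<cdot>\<^sub>v v"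
    using unitary_completion[OF v(1,2)] by blast
  have Wc: "W \<in> carrier_mat (Suc m) (Suc m)"
    using W(1) by (rule unitary_mat_carrier)
  let ?B = "mat_adjoint W * A * W"
  have "?B \<in> carrier_mat (Suc m) (Suc m)" "mat_adjoint ?B = ?B"
    using A Wc herm by (auto simp: mat_adjoint_conj)
  from hermitian_first_col_block[OF this unitary_conj_eigenvector_col[OF W(1) A W(2) v(1,3)]]
  show ?thesis
    using unitary_mat_conj_cancel[OF W(1) A] W(1) by (metis mat_carrier)
qed

lemma hermitian_spectral:
  fixes A :: "complex mat"
  assumes "A \<in> carrier_mat n n" "mat_adjoint A = A"
  shows "\<exists>U D. unitary_mat n U \<and> D \<in> carrier_mat n n \<and> diagonal_mat D \<and> A = U * D * mat_adjoint U"
  using assms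
proof (induction n arbitrary: A)
  case 0
  then have "A = 1\<^sub>m 0 * A * mat_adjoint (1\<^sub>m 0)" "diagonal_mat A"
    by (auto simp: diagonal_mat_def)
  moreover have "unitary_mat 0 (1\<^sub>m 0 :: complex mat)"
    by (auto simp: unitary_mat_def)
  ultimately show ?case
    using 0 by blast
next
  case (Suc m A)
  obtain W e A3 where W: "unitary_mat (Suc m) W" and A3: "A3 \<in> carrier_mat m m" "mat_adjoint A3 = A3"
    and A: "A = W * four_block_mat (mat 1 1 (\<lambda>_. e)) (0\<^sub>m 1 m) (0\<^sub>m m 1) A3 * mat_adjoint W"
    using hermitian_deflation[OF Suc.prems] by blast
  obtain U3 D3 where U3: "unitary_mat m U3" and D3: "D3 \<in> carrier_mat m m" "diagonal_mat D3"
    and A3_eq: "A3 = U3 * D3 * mat_adjoint U3"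
    using Suc.IH[OF A3] by blast
  have U3c: "U3 \<in> carrier_mat m m"
    using U3 by (rule unitary_mat_carrier)
  define V where "V = four_block_mat (1\<^sub>m 1) (0\<^sub>m 1 m) (0\<^sub>m m 1) U3"
  define D where "D = four_block_mat (mat 1 1 (\<lambda>_. e)) (0\<^sub>m 1 m) (0\<^sub>m m 1) D3"
  have D: "D \<in> carrier_mat (Suc m) (Suc m)" "diagonal_mat D"
    using D3 by (auto simp: D_def diagonal_mat_def)
  have "four_block_mat (mat 1 1 (\<lambda>_. e)) (0\<^sub>m 1 m) (0\<^sub>m m 1) A3 = V * D * mat_adjoint V"
    unfolding V_def D_def mat_adjoint_one_block[OF U3c] A3_eq
    by (subst mult_four_block_mat, use U3c D3 in auto)+
  then have "A = (W * V) * D * mat_adjoint (W * V)"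
    using unitary_mat_conj_trans[OF W unitary_mat_one_block[OF U3] D(1) A] V_def by simp
  then show ?case
    using unitary_mat_mult[OF W unitary_mat_one_block[OF U3, folded V_def]] D by blast
qed

section \<open>Shannon entropy\<close>

lemma eta_mult:
  assumes "x \<ge> 0" "y \<ge> 0"
  shows "eta (x * y) = x * eta y + y * eta x"
proof (cases "x = 0 \<or> y = 0")
  case False
  then have x: "x > 0" and y: "y > 0" using assms by auto
  then have "x * y > 0" by simp
  then have "eta (x * y) = - (x * y) * log 2 (x * y)"
    by (simp add: eta_def)
  moreover have "eta x = - x * log 2 x" "eta y = - y * log 2 y"
    using x y by (simp_all add: eta_def)
  ultimately show ?thesis
    using x y by (simp add: log_mult algebra_simps)
qed (auto simp: eta_def)

lemma eta_add_le:
  assumes "x \<ge> 0" "y \<ge> 0"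
  shows "eta (x + y) \<le> eta x + eta y"
proof (cases "x = 0 \<or> y = 0")
  case False
  then have x: "x > 0" and y: "y > 0" using assms by auto
  have "x * log 2 x \<le> x * log 2 (x + y)" and "y * log 2 y \<le> y * log 2 (x + y)"
    using x y by (auto intro: mult_left_mono)
  from add_mono[OF this] show ?thesis
    using x y by (simp add: eta_def algebra_simps)
qed (use assms in \<open>auto simp: eta_def\<close>)

lemma eta_sum_le:
  assumes "finite I" "\<And>i. i \<in> I \<Longrightarrow> f i \<ge> 0"
  shows "eta (sum f I) \<le> (\<Sum>i\<in>I. eta (f i))"
  using assms
proof (induction I rule: finite_induct)
  case (insert a F)
  have "eta (sum f (insert a F)) \<le> eta (f a) + eta (sum f F)"
    using insert by (simp add: eta_add_le sum_nonneg)
  also have "\<dots> \<le> eta (f a) + (\<Sum>i\<in>F. eta (f i))"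
    using insert by simp
  finally show ?case
    using insert by simp
qed (simp add: eta_def)

lemma eta_mixture_le:
  assumes I: "finite I" and J: "finite J"
    and q: "\<And>m. m \<in> I \<Longrightarrow> q m \<ge> 0" and a: "\<And>m i. m \<in> I \<Longrightarrow> i \<in> J \<Longrightarrow> a m i \<ge> 0"
    and a1: "\<And>m. m \<in> I \<Longrightarrow> (\<Sum>i\<in>J. a m i) = 1"
  shows "(\<Sum>i\<in>J. eta (\<Sum>m\<in>I. q m * a m i))
    \<le> (\<Sum>m\<in>I. q m * (\<Sum>i\<in>J. eta (a m i))) + (\<Sum>m\<in>I. eta (q m))"
proof -
  have "(\<Sum>i\<in>J. eta (\<Sum>m\<in>I. q m * a m i)) \<le> (\<Sum>i\<in>J. \<Sum>m\<in>I. eta (q m * a m i))"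
    using q a by (intro sum_mono eta_sum_le[OF I]) auto
  also have "\<dots> = (\<Sum>i\<in>J. \<Sum>m\<in>I. q m * eta (a m i) + a m i * eta (q m))"
    using q a by (intro sum.cong refl eta_mult) auto
  also have "\<dots> = (\<Sum>m\<in>I. q m * (\<Sum>i\<in>J. eta (a m i))) + (\<Sum>m\<in>I. (\<Sum>i\<in>J. a m i) * eta (q m))"
    by (simp add: sum.distrib sum_distrib_left sum_distrib_right sum.swap[of _ J I])
  finally show ?thesis
    using a1 by simp
qed

lemma eta_grouping:
  assumes J: "finite J" and b: "\<And>j. j \<in> J \<Longrightarrow> b j \<ge> 0" and p: "p = (\<Sum>j\<in>J. b j)"
    and a: "p > 0 \<Longrightarrow> \<forall>j\<in>J. a j = b j / p"
  shows "(\<Sum>j\<in>J. eta (b j)) = eta p + p * (\<Sum>j\<in>J. eta (a j))"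
proof (cases "p > 0")
  case False
  then have "p = 0" using p b by (metis sum_nonneg linorder_not_less order_antisym)
  then have "\<forall>j\<in>J. b j = 0" using p b J by (metis sum_nonneg_eq_0_iff)
  then show ?thesis using \<open>p = 0\<close> by (simp add: eta_def)
next
  case True
  have a_sum: "(\<Sum>j\<in>J. a j) = 1"
    using a[OF True] True p by (simp add: sum_divide_distrib[symmetric])
  have "(\<Sum>j\<in>J. eta (b j)) = (\<Sum>j\<in>J. eta (p * a j))"
    using a[OF True] True by (intro sum.cong) auto
  also have "\<dots> = (\<Sum>j\<in>J. p * eta (a j) + a j * eta p)"
    using True a b by (intro sum.cong refl eta_mult) auto
  also have "\<dots> = p * (\<Sum>j\<in>J. eta (a j)) + (\<Sum>j\<in>J. a j) * eta p"
    by (simp add: sum.distrib sum_distrib_left sum_distrib_right)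
  finally show ?thesis
    using a_sum by simp
qed

lemma eta_le: "eta x \<le> 1 / ln 2"
proof (cases "x \<le> 0")
  case False
  then have x: "x > 0" by simp
  have "ln (1 / x) \<le> 1 / x - 1"
    using x by (intro ln_le_minus_one) simp
  then have "x * (- ln x) \<le> x * (1 / x - 1)"
    using x by (intro mult_left_mono) (auto simp: ln_div)
  then have "- x * ln x \<le> 1"
    using x by (simp add: algebra_simps)
  then have "- x * ln x / ln 2 \<le> 1 / ln 2"
    by (intro divide_right_mono) auto
  then show ?thesis
    using x by (simp add: eta_def log_def)
qed (simp add: eta_def)

section \<open>Von Neumann entropy\<close>

lemma sum_list_map_eq_sum_count_real:
  "sum_list (map (f :: 'a \<Rightarrow> real) xs) = (\<Sum>x\<in>set xs. real (count_list xs x) * f x)"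
proof (induction xs)
  case (Cons x xs)
  have "(\<Sum>y\<in>set (x # xs). real (count_list (x # xs) y) * f y)
      = (\<Sum>y\<in>insert x (set xs). real (count_list xs y) * f y + (if x = y then f y else 0))"
    by (rule sum.cong) (auto simp: distrib_right)
  also have "\<dots> = (\<Sum>y\<in>insert x (set xs). real (count_list xs y) * f y) + f x"
    by (simp add: sum.distrib)
  also have "(\<Sum>y\<in>insert x (set xs). real (count_list xs y) * f y)
      = (\<Sum>y\<in>set xs. real (count_list xs y) * f y)"
    by (cases "x \<in> set xs") (simp_all add: insert_absorb count_list_0_iff)
  finally show ?case
    using Cons by simp
qed simp

lemma order_prod_list_linear:
  fixes x :: "'a :: idom"
  shows "Polynomial.order x (\<Prod>a\<leftarrow>as. [:- a, 1:]) = count_list as x"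
proof (induction as)
  case (Cons a as)
  have nz: "(\<Prod>a\<leftarrow>as. [:- a, 1:]) \<noteq> 0"
    by (auto simp: prod_list_zero_iff)
  have "Polynomial.order x ([:- a, 1:] * (\<Prod>a\<leftarrow>as. [:- a, 1:]))
      = Polynomial.order x [:- a, 1:] + Polynomial.order x (\<Prod>a\<leftarrow>as. [:- a, 1:])"
    by (rule order_mult) (metis nz mult_eq_0_iff pCons_eq_0_iff one_neq_zero)
  moreover have "Polynomial.order x [:- a, 1:] = (if x = a then 1 else 0)"
  proof (cases "x = a")
    case True
    then show ?thesis using order_power_n_n[of a 1] by simp
  next
    case False
    then show ?thesis using order_0I[of "[:- a, 1:]" x] by simp
  qed
  ultimately show ?case
    using Cons by auto
qed simp

lemma vN_entropy_linear_factors: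
  assumes "char_poly M = (\<Prod>a\<leftarrow>as. [:- a, 1:])"
  shows "vN_entropy M = (\<Sum>a\<leftarrow>as. eta (Re a))"
proof -
  have roots: "{x. poly (char_poly M) x = 0} = set as"
    unfolding assms by (auto simp: poly_prod_list prod_list_zero_iff)
  show ?thesis
    unfolding vN_entropy_def roots sum_list_map_eq_sum_count_real
    by (simp add: assms order_prod_list_linear)
qed

lemma vN_entropy_similar: "similar_mat A B \<Longrightarrow> vN_entropy A = vN_entropy B"
  unfolding vN_entropy_def by (simp add: char_poly_similar)

lemma vN_entropy_transpose:
  "A \<in> carrier_mat n n \<Longrightarrow> vN_entropy (transpose_mat A) = vN_entropy A"
  unfolding vN_entropy_def using char_poly_transpose_mat by simp

lemma vN_entropy_upper_triangular:
  assumes "D \<in> carrier_mat n n" "upper_triangular D"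
  shows "vN_entropy D = (\<Sum>i<n. eta (Re (D $$ (i, i))))"
proof -
  have "vN_entropy D = (\<Sum>a\<leftarrow>diag_mat D. eta (Re a))"
    by (rule vN_entropy_linear_factors[OF char_poly_upper_triangular[OF assms]])
  then show ?thesis
    using assms(1) by (simp add: diag_mat_def sum_list_sum_nth atLeast0LessThan)
qed

lemma vN_entropy_diagonal:
  "D \<in> carrier_mat n n \<Longrightarrow> diagonal_mat D \<Longrightarrow> vN_entropy D = (\<Sum>i<n. eta (Re (D $$ (i, i))))"
  by (rule vN_entropy_upper_triangular) (auto simp: upper_triangular_def diagonal_mat_def)

lemma vN_entropy_le:
  assumes "M \<in> carrier_mat n n"
  shows "vN_entropy M \<le> real n / ln 2"
proof -
  obtain as where as: "char_poly M = (\<Prod>a\<leftarrow>as. [:- a, 1:])" "length as = n"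
    using char_poly_factorized[OF assms] by blast
  have "vN_entropy M = (\<Sum>a\<leftarrow>as. eta (Re a))"
    by (rule vN_entropy_linear_factors[OF as(1)])
  also have "\<dots> \<le> (\<Sum>a\<leftarrow>as. 1 / ln 2)"
    by (rule sum_list_mono) (rule eta_le)
  finally show ?thesis
    using as(2) by (simp add: sum_list_triv)
qed

lemma det_four_block_smult_one_XY:
  fixes X Y :: "'a :: idom mat"
  assumes X: "X \<in> carrier_mat n m" and Y: "Y \<in> carrier_mat m n"
  shows "det (four_block_mat (k \<cdot>\<^sub>m 1\<^sub>m n) X Y (1\<^sub>m m)) = det (k \<cdot>\<^sub>m 1\<^sub>m n - X * Y)"
proof -
  define M where "M = four_block_mat (k \<cdot>\<^sub>m 1\<^sub>m n) X Y (1\<^sub>m m)"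
  define L where "L = four_block_mat (1\<^sub>m n) (- X) (0\<^sub>m m n) (1\<^sub>m m)"
  have Mc: "M \<in> carrier_mat (n + m) (n + m)" unfolding M_def using X Y by auto
  have Lc: "L \<in> carrier_mat (n + m) (n + m)" unfolding L_def using X Y by auto
  have "L * M = four_block_mat (1\<^sub>m n * (k \<cdot>\<^sub>m 1\<^sub>m n) + (- X) * Y) (1\<^sub>m n * X + (- X) * 1\<^sub>m m)
     (0\<^sub>m m n * (k \<cdot>\<^sub>m 1\<^sub>m n) + 1\<^sub>m m * Y) (0\<^sub>m m n * X + 1\<^sub>m m * 1\<^sub>m m)"
    unfolding L_def M_def by (rule mult_four_block_mat) (use X Y in auto)
  also have "1\<^sub>m n * (k \<cdot>\<^sub>m 1\<^sub>m n) + (- X) * Y = k \<cdot>\<^sub>m 1\<^sub>m n - X * Y"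
    by (rule eq_matI) (use X Y in auto)
  also have "1\<^sub>m n * X + (- X) * 1\<^sub>m m = 0\<^sub>m n m"
    by (rule eq_matI) (use X Y in auto)
  also have "0\<^sub>m m n * (k \<cdot>\<^sub>m 1\<^sub>m n) + 1\<^sub>m m * Y = Y"
    by (rule eq_matI) (use X Y in auto)
  also have "0\<^sub>m m n * X + 1\<^sub>m m * 1\<^sub>m m = 1\<^sub>m m"
    by (rule eq_matI) (use X Y in auto)
  finally have LM: "L * M = four_block_mat (k \<cdot>\<^sub>m 1\<^sub>m n - X * Y) (0\<^sub>m n m) Y (1\<^sub>m m)" .
  have "k \<cdot>\<^sub>m 1\<^sub>m n - X * Y \<in> carrier_mat n n"
    using X Y by (intro minus_carrier_mat) auto
  from det_four_block_mat_upper_right_zero[OF this refl Y one_carrier_mat]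
  have "det (L * M) = det (k \<cdot>\<^sub>m 1\<^sub>m n - X * Y)"
    unfolding LM by simp
  moreover have "det L = 1" unfolding L_def
    by (subst det_four_block_mat_lower_left_zero[of _ n _ m]) (use X in auto)
  ultimately show ?thesis
    using det_mult[OF Lc Mc] by (simp add: M_def)
qed

lemma det_four_block_smult_one_YX:
  fixes X Y :: "'a :: idom mat"
  assumes X: "X \<in> carrier_mat n m" and Y: "Y \<in> carrier_mat m n"
  shows "k ^ m * det (four_block_mat (k \<cdot>\<^sub>m 1\<^sub>m n) X Y (1\<^sub>m m)) = k ^ n * det (k \<cdot>\<^sub>m 1\<^sub>m m - Y * X)"
proof -
  define M where "M = four_block_mat (k \<cdot>\<^sub>m 1\<^sub>m n) X Y (1\<^sub>m m)"
  define L where "L = four_block_mat (1\<^sub>m n) (0\<^sub>m n m) (- Y) (k \<cdot>\<^sub>m 1\<^sub>m m)"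
  have Mc: "M \<in> carrier_mat (n + m) (n + m)" unfolding M_def using X Y by auto
  have Lc: "L \<in> carrier_mat (n + m) (n + m)" unfolding L_def using X Y by auto
  have "L * M = four_block_mat (1\<^sub>m n * (k \<cdot>\<^sub>m 1\<^sub>m n) + 0\<^sub>m n m * Y) (1\<^sub>m n * X + 0\<^sub>m n m * 1\<^sub>m m)
     ((- Y) * (k \<cdot>\<^sub>m 1\<^sub>m n) + (k \<cdot>\<^sub>m 1\<^sub>m m) * Y) ((- Y) * X + (k \<cdot>\<^sub>m 1\<^sub>m m) * 1\<^sub>m m)"
    unfolding L_def M_def by (rule mult_four_block_mat) (use X Y in auto)
  also have "1\<^sub>m n * (k \<cdot>\<^sub>m 1\<^sub>m n) + 0\<^sub>m n m * Y = k \<cdot>\<^sub>m 1\<^sub>m n"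
    by (rule eq_matI) (use X Y in auto)
  also have "1\<^sub>m n * X + 0\<^sub>m n m * 1\<^sub>m m = X"
    by (rule eq_matI) (use X Y in auto)
  also have "(- Y) * (k \<cdot>\<^sub>m 1\<^sub>m n) + (k \<cdot>\<^sub>m 1\<^sub>m m) * Y = 0\<^sub>m m n"
    by (rule eq_matI) (use X Y in auto)
  also have "(- Y) * X + (k \<cdot>\<^sub>m 1\<^sub>m m) * 1\<^sub>m m = k \<cdot>\<^sub>m 1\<^sub>m m - Y * X"
    by (rule eq_matI) (use X Y in auto)
  finally have LM: "L * M = four_block_mat (k \<cdot>\<^sub>m 1\<^sub>m n) X (0\<^sub>m m n) (k \<cdot>\<^sub>m 1\<^sub>m m - Y * X)" .
  have "k \<cdot>\<^sub>m 1\<^sub>m m - Y * X \<in> carrier_mat m m"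
    using X Y by (intro minus_carrier_mat) auto
  from det_four_block_mat_lower_left_zero[OF smult_carrier_mat[OF one_carrier_mat] X refl this]
  have "det (L * M) = k ^ n * det (k \<cdot>\<^sub>m 1\<^sub>m m - Y * X)"
    unfolding LM by simp
  moreover have "det L = k ^ m" unfolding L_def
    by (subst det_four_block_mat_upper_right_zero[of _ n _ m]) (use Y in auto)
  ultimately show ?thesis
    using det_mult[OF Lc Mc] by (simp add: M_def)
qed

lemma det_sylvester:
  fixes X Y :: "'a :: idom mat"
  assumes "X \<in> carrier_mat n m" "Y \<in> carrier_mat m n"
  shows "k ^ m * det (k \<cdot>\<^sub>m 1\<^sub>m n - X * Y) = k ^ n * det (k \<cdot>\<^sub>m 1\<^sub>m m - Y * X)"
  using det_four_block_smult_one_XY[OF assms, of k] det_four_block_smult_one_YX[OF assms, of k] by simp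

lemma char_poly_mult_comm:
  fixes X Y :: "complex mat"
  assumes X: "X \<in> carrier_mat n m" and Y: "Y \<in> carrier_mat m n"
  shows "[:0, 1:] ^ m * char_poly (X * Y) = [:0, 1:] ^ n * char_poly (Y * X)"
proof -
  have "poly ([:0, 1:] ^ m * char_poly (X * Y)) k = poly ([:0, 1:] ^ n * char_poly (Y * X)) k" for k
  proof -
    have "- char_matrix (X * Y) k = k \<cdot>\<^sub>m 1\<^sub>m n - X * Y"
      "- char_matrix (Y * X) k = k \<cdot>\<^sub>m 1\<^sub>m m - Y * X"
      by (rule eq_matI, use X Y in \<open>auto simp: char_matrix_def\<close>)+
    then show ?thesis
      using det_sylvester[OF X Y, of k] mult_carrier_mat[OF X Y] mult_carrier_mat[OF Y X]
      by (simp add: char_poly_matrix poly_power)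
  qed
  then show ?thesis
    using poly_eq_poly_eq_iff by blast
qed

lemma vN_entropy_nonzero_roots:
  assumes "A \<in> carrier_mat n n"
  shows "vN_entropy A
    = (\<Sum>x\<in>{x. poly (char_poly A) x = 0 \<and> x \<noteq> 0}. real (Polynomial.order x (char_poly A)) * eta (Re x))"
proof -
  have "char_poly A \<noteq> 0"
    using degree_monic_char_poly[OF assms] by auto
  then show ?thesis
    unfolding vN_entropy_def
    by (intro sum.mono_neutral_right) (auto simp: eta_def poly_roots_finite)
qed

text \<open>XY and YX have the same nonzero eigenvalues with multiplicities, and zero eigenvalues
  do not contribute to the entropy.\<close>

lemma vN_entropy_mult_comm:
  fixes X Y :: "complex mat"
  assumes X: "X \<in> carrier_mat n m" and Y: "Y \<in> carrier_mat m n"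
  shows "vN_entropy (X * Y) = vN_entropy (Y * X)"
proof -
  have XY: "X * Y \<in> carrier_mat n n" and YX: "Y * X \<in> carrier_mat m m" using X Y by auto
  let ?p = "char_poly (X * Y)" and ?q = "char_poly (Y * X)"
  have pq: "[:0, 1:] ^ m * ?p = [:0, 1:] ^ n * ?q" by (rule char_poly_mult_comm[OF X Y])
  have nz: "?p \<noteq> 0" "?q \<noteq> 0"
    using degree_monic_char_poly[OF XY] degree_monic_char_poly[OF YX] by auto
  have X_pow: "poly ([:0, 1:] ^ k) x \<noteq> 0" "Polynomial.order x ([:0, 1:] ^ k) = 0"
    if "x \<noteq> 0" for x :: complex and k
    using that order_0I[of "[:0, 1:] ^ k" x] by (auto simp: poly_power)
  have "Polynomial.order x ?p = Polynomial.order x ?q" if "x \<noteq> 0" for x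
    using arg_cong[OF pq, of "Polynomial.order x"] X_pow(2)[OF that, of m] X_pow(2)[OF that, of n] nz
    by (simp add: order_mult)
  moreover have "poly ?p x = 0 \<longleftrightarrow> poly ?q x = 0" if "x \<noteq> 0" for x
    using arg_cong[OF pq, of "\<lambda>r. poly r x"] X_pow(1)[OF that, of m] X_pow(1)[OF that, of n]
    by auto
  ultimately show ?thesis
    unfolding vN_entropy_nonzero_roots[OF XY] vN_entropy_nonzero_roots[OF YX]
    by (intro sum.cong) auto
qed

section \<open>Pure bipartite states\<close>

lemma sum_lessThan_mult:
  fixes f :: "nat \<Rightarrow> 'a :: comm_monoid_add"
  shows "(\<Sum>k<a * b. f k) = (\<Sum>i<a. \<Sum>j<b. f (i * b + j))"
proof -
  have "(\<Sum>k<a * b. f k) = (\<Sum>i<a. sum f {i * b..<i * b + b})"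
    by (rule sum.nat_group[of f b a, symmetric])
  also have "\<dots> = (\<Sum>i<a. \<Sum>j<b. f (i * b + j))"
  proof (rule sum.cong[OF refl])
    fix i
    have "sum f {0 + i * b..<b + i * b} = (\<Sum>j\<in>{0..<b}. f (j + i * b))"
      by (rule sum.shift_bounds_nat_ivl)
    then show "sum f {i * b..<i * b + b} = (\<Sum>j<b. f (i * b + j))"
      by (simp add: atLeast0LessThan add.commute)
  qed
  finally show ?thesis .
qed

lemma mult_add_less_mult:
  fixes i j a b :: nat
  assumes "i < a" "j < b"
  shows "i * b + j < a * b"
proof -
  have "(i + 1) * b \<le> a * b" using assms by (intro mult_right_mono) auto
  then show ?thesis using assms by (simp add: algebra_simps)
qed

lemma proj_carrier[simp]: "\<psi> \<in> carrier_vec n \<Longrightarrow> proj \<psi> \<in> carrier_mat n n"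
  by (auto simp: proj_def)

lemma proj_index[simp]:
  "\<psi> \<in> carrier_vec n \<Longrightarrow> i < n \<Longrightarrow> j < n \<Longrightarrow> proj \<psi> $$ (i, j) = \<psi> $ i * cnj (\<psi> $ j)"
  by (auto simp: proj_def)

lemma dephase_proj_carrier:
  assumes "\<psi> \<in> carrier_vec n"
  shows "dephase (proj \<psi>) \<in> carrier_mat n n"
proof -
  have "dim_row (proj \<psi>) = n" "dim_col (proj \<psi>) = n"
    using proj_carrier[OF assms] by auto
  then show ?thesis
    by (simp add: dephase_def)
qed

lemma vN_entropy_dephase_proj:
  assumes "\<psi> \<in> carrier_vec n"
  shows "vN_entropy (dephase (proj \<psi>)) = (\<Sum>k<n. eta ((cmod (\<psi> $ k))\<^sup>2))"
proof -
  have "dephase (proj \<psi>) \<in> carrier_mat n n" "diagonal_mat (dephase (proj \<psi>))"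
    using dephase_proj_carrier[OF assms] by (auto simp: dephase_def diagonal_mat_def)
  moreover have "dephase (proj \<psi>) $$ (k, k) = complex_of_real ((cmod (\<psi> $ k))\<^sup>2)" if "k < n" for k
    using assms that complex_norm_square[of "\<psi> $ k"] by (simp add: dephase_def proj_def)
  ultimately show ?thesis
    by (simp add: vN_entropy_diagonal)
qed

definition marginal_A :: "nat \<Rightarrow> complex vec \<Rightarrow> nat \<Rightarrow> real" where
  "marginal_A dB \<psi> i = (\<Sum>j<dB. (cmod (\<psi> $ (i * dB + j)))\<^sup>2)"

lemma marginal_A_nonneg: "marginal_A dB \<psi> i \<ge> 0"
  by (simp add: marginal_A_def sum_nonneg)

lemma marginal_A_sum:
  assumes "unit_vec_c (dA * dB) \<psi>"
  shows "(\<Sum>i<dA. marginal_A dB \<psi> i) = 1"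
proof -
  have "(\<Sum>i<dA. marginal_A dB \<psi> i) = (\<Sum>k<dA * dB. (cmod (\<psi> $ k))\<^sup>2)"
    unfolding marginal_A_def by (rule sum_lessThan_mult[symmetric])
  then show ?thesis
    using assms by (simp add: unit_vec_c_def)
qed

definition split_A_mat :: "nat \<Rightarrow> nat \<Rightarrow> complex vec \<Rightarrow> complex mat" where
  "split_A_mat dA dB \<psi> = mat (dA * dB) dA (\<lambda>(k, i). if k div dB = i then \<psi> $ k else 0)"

lemma split_A_mat_carrier: "split_A_mat dA dB \<psi> \<in> carrier_mat (dA * dB) dA"
  by (simp add: split_A_mat_def)

lemma split_A_mat_mult_adjoint:
  assumes psi: "\<psi> \<in> carrier_vec (dA * dB)"
  shows "split_A_mat dA dB \<psi> * mat_adjoint (split_A_mat dA dB \<psi>) = dephase_A dA dB (proj \<psi>)"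
proof (rule eq_matI)
  let ?n = "dA * dB" and ?X = "split_A_mat dA dB \<psi>"
  fix k l assume "k < dim_row (dephase_A dA dB (proj \<psi>))" "l < dim_col (dephase_A dA dB (proj \<psi>))"
  then have kl: "k < ?n" "l < ?n" by (auto simp: dephase_A_def)
  have "(?X * mat_adjoint ?X) $$ (k, l)
      = (\<Sum>i<dA. (if k div dB = i then \<psi> $ k else 0) * cnj (if l div dB = i then \<psi> $ l else 0))"
    using kl split_A_mat_carrier by (simp add: scalar_prod_def split_A_mat_def atLeast0LessThan)
  also have "\<dots> = (if k div dB = l div dB then \<psi> $ k * cnj (\<psi> $ l) else 0)"
  proof (cases "k div dB = l div dB")
    case True
    have "(\<Sum>i<dA. (if k div dB = i then \<psi> $ k else 0) * cnj (if l div dB = i then \<psi> $ l else 0))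
        = (\<Sum>i<dA. if k div dB = i then \<psi> $ k * cnj (\<psi> $ l) else 0)"
      by (rule sum.cong) (auto simp: True)
    also have "\<dots> = \<psi> $ k * cnj (\<psi> $ l)"
      using kl(1) by (simp add: sum.delta less_mult_imp_div_less)
    finally show ?thesis using True by simp
  qed (auto intro!: sum.neutral)
  finally show "(?X * mat_adjoint ?X) $$ (k, l) = dephase_A dA dB (proj \<psi>) $$ (k, l)"
    using kl psi by (simp add: dephase_A_def)
qed (auto simp: split_A_mat_def dephase_A_def)

lemma adjoint_mult_split_A_mat:
  "mat_adjoint (split_A_mat dA dB \<psi>) * split_A_mat dA dB \<psi>
    = mat dA dA (\<lambda>(i, i'). if i = i' then complex_of_real (marginal_A dB \<psi> i) else 0)"
proof (rule eq_matI)
  let ?X = "split_A_mat dA dB \<psi>"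
  fix i i' assume "i < dim_row (mat dA dA (\<lambda>(i, i'). if i = i' then complex_of_real (marginal_A dB \<psi> i) else 0))"
    "i' < dim_col (mat dA dA (\<lambda>(i, i'). if i = i' then complex_of_real (marginal_A dB \<psi> i) else 0))"
  then have ii: "i < dA" "i' < dA" by auto
  have "(mat_adjoint ?X * ?X) $$ (i, i')
      = (\<Sum>k<dA * dB. cnj (if k div dB = i then \<psi> $ k else 0) * (if k div dB = i' then \<psi> $ k else 0))"
    using ii split_A_mat_carrier by (simp add: scalar_prod_def split_A_mat_def atLeast0LessThan)
  also have "\<dots> = (\<Sum>i2<dA. \<Sum>j<dB. cnj (if i2 = i then \<psi> $ (i2 * dB + j) else 0)
      * (if i2 = i' then \<psi> $ (i2 * dB + j) else 0))"
    by (subst sum_lessThan_mult) (auto intro!: sum.cong)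
  also have "\<dots> = (if i = i' then complex_of_real (marginal_A dB \<psi> i) else 0)"
  proof (cases "i = i'")
    case True
    have "(\<Sum>i2<dA. \<Sum>j<dB. cnj (if i2 = i then \<psi> $ (i2 * dB + j) else 0)
        * (if i2 = i' then \<psi> $ (i2 * dB + j) else 0))
        = (\<Sum>i2<dA. if i2 = i then (\<Sum>j<dB. cnj (\<psi> $ (i * dB + j)) * \<psi> $ (i * dB + j)) else 0)"
      by (rule sum.cong) (auto simp: True)
    also have "\<dots> = complex_of_real (marginal_A dB \<psi> i)"
      using ii by (simp add: sum.delta' marginal_A_def cnj_mult_self_eq)
    finally show ?thesis using True by simp
  qed (auto intro!: sum.neutral)
  finally show "(mat_adjoint ?X * ?X) $$ (i, i')
      = mat dA dA (\<lambda>(i, i'). if i = i' then complex_of_real (marginal_A dB \<psi> i) else 0) $$ (i, i')"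
    using ii by simp
qed (auto simp: split_A_mat_def)

lemma vN_entropy_dephase_A_proj:
  assumes "\<psi> \<in> carrier_vec (dA * dB)"
  shows "vN_entropy (dephase_A dA dB (proj \<psi>)) = (\<Sum>i<dA. eta (marginal_A dB \<psi> i))"
proof -
  have "vN_entropy (dephase_A dA dB (proj \<psi>))
      = vN_entropy (mat dA dA (\<lambda>(i, i'). if i = i' then complex_of_real (marginal_A dB \<psi> i) else 0))"
    unfolding split_A_mat_mult_adjoint[OF assms, symmetric] adjoint_mult_split_A_mat[symmetric]
    by (rule vN_entropy_mult_comm[OF split_A_mat_carrier mat_adjoint_carrier[OF split_A_mat_carrier]])
  also have "\<dots> = (\<Sum>i<dA. eta (marginal_A dB \<psi> i))"
    by (subst vN_entropy_diagonal) (auto simp: diagonal_mat_def)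
  finally show ?thesis .
qed

definition coeff_mat :: "nat \<Rightarrow> nat \<Rightarrow> complex vec \<Rightarrow> complex mat" where
  "coeff_mat dA dB \<psi> = mat dA dB (\<lambda>(i, j). \<psi> $ (i * dB + j))"

lemma coeff_mat_carrier[simp]: "coeff_mat dA dB \<psi> \<in> carrier_mat dA dB"
  by (simp add: coeff_mat_def)

lemma ptrace_B_proj:
  "\<psi> \<in> carrier_vec (dA * dB)
    \<Longrightarrow> ptrace_B dA dB (proj \<psi>) = coeff_mat dA dB \<psi> * mat_adjoint (coeff_mat dA dB \<psi>)"
  by (rule eq_matI)
    (auto simp: ptrace_B_def coeff_mat_def scalar_prod_def atLeast0LessThan mult_add_less_mult
      intro!: sum.cong)

lemma ptrace_A_proj:
  "\<psi> \<in> carrier_vec (dA * dB)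
    \<Longrightarrow> ptrace_A dA dB (proj \<psi>) = transpose_mat (mat_adjoint (coeff_mat dA dB \<psi>) * coeff_mat dA dB \<psi>)"
  by (rule eq_matI)
    (auto simp: ptrace_A_def coeff_mat_def scalar_prod_def atLeast0LessThan mult_add_less_mult
      mult.commute intro!: sum.cong)

lemma vN_entropy_ptrace_A_proj:
  assumes "\<psi> \<in> carrier_vec (dA * dB)"
  shows "vN_entropy (ptrace_A dA dB (proj \<psi>)) = vN_entropy (ptrace_B dA dB (proj \<psi>))"
proof -
  have c: "mat_adjoint (coeff_mat dA dB \<psi>) * coeff_mat dA dB \<psi> \<in> carrier_mat dB dB"
    using mult_carrier_mat[OF mat_adjoint_carrier[OF coeff_mat_carrier] coeff_mat_carrier] by simp
  show ?thesis
    unfolding ptrace_A_proj[OF assms] ptrace_B_proj[OF assms] vN_entropy_transpose[OF c]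
    by (intro vN_entropy_mult_comm) auto
qed

lemma ptrace_B_proj_diag:
  assumes psi: "\<psi> \<in> carrier_vec (dA * dB)" and i: "i < dA"
  shows "ptrace_B dA dB (proj \<psi>) $$ (i, i) = complex_of_real (marginal_A dB \<psi> i)"
proof -
  have "ptrace_B dA dB (proj \<psi>) $$ (i, i) = (\<Sum>j<dB. \<psi> $ (i * dB + j) * cnj (\<psi> $ (i * dB + j)))"
    using psi i by (auto simp: ptrace_B_def mult_add_less_mult intro!: sum.cong)
  also have "\<dots> = complex_of_real (marginal_A dB \<psi> i)"
    by (simp add: marginal_A_def complex_norm_square[symmetric])
  finally show ?thesis .
qed

definition pos_semidef :: "nat \<Rightarrow> complex mat \<Rightarrow> bool" where
  "pos_semidef n \<sigma> \<longleftrightarrow> (\<forall>v \<in> carrier_vec n. 0 \<le> (\<Sum>i<n. \<Sum>j<n. cnj (v $ i) * \<sigma> $$ (i, j) * v $ j))"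

lemma pos_semidef_gram:
  assumes Y: "Y \<in> carrier_mat n k"
  shows "pos_semidef n (Y * mat_adjoint Y)"
  unfolding pos_semidef_def
proof
  fix v :: "complex vec" assume v: "v \<in> carrier_vec n"
  define w where "w j = (\<Sum>i<n. cnj (v $ i) * Y $$ (i, j))" for j
  define f where "f i j = cnj (v $ i) * Y $$ (i, j)" for i j
  define g where "g i' j = cnj (Y $$ (i', j)) * v $ i'" for i' j
  have "(\<Sum>i<n. \<Sum>i'<n. cnj (v $ i) * (Y * mat_adjoint Y) $$ (i, i') * v $ i')
      = (\<Sum>i<n. \<Sum>i'<n. \<Sum>j<k. f i j * g i' j)"
  proof (intro sum.cong refl)
    fix i i' assume "i \<in> {..<n}" "i' \<in> {..<n}"
    then have "(Y * mat_adjoint Y) $$ (i, i') = (\<Sum>j<k. Y $$ (i, j) * cnj (Y $$ (i', j)))"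
      using Y by (simp add: scalar_prod_def atLeast0LessThan)
    then show "cnj (v $ i) * (Y * mat_adjoint Y) $$ (i, i') * v $ i' = (\<Sum>j<k. f i j * g i' j)"
      unfolding f_def g_def by (simp add: sum_distrib_left sum_distrib_right mult_ac)
  qed
  also have "\<dots> = (\<Sum>j<k. \<Sum>i<n. \<Sum>i'<n. f i j * g i' j)"
    by (subst sum.swap) (simp add: sum.swap[of _ "{..<n}" "{..<k}"])
  also have "\<dots> = (\<Sum>j<k. w j * cnj (w j))"
  proof (rule sum.cong[OF refl])
    fix j
    have "cnj (w j) = (\<Sum>i'<n. g i' j)" unfolding w_def g_def by (simp add: mult.commute)
    then show "(\<Sum>i<n. \<Sum>i'<n. f i j * g i' j) = w j * cnj (w j)"
      unfolding w_def f_def by (simp add: sum_product)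
  qed
  also have "\<dots> = complex_of_real (\<Sum>j<k. (cmod (w j))\<^sup>2)"
    by (simp add: complex_norm_square[symmetric])
  finally show "0 \<le> (\<Sum>i<n. \<Sum>i'<n. cnj (v $ i) * (Y * mat_adjoint Y) $$ (i, i') * v $ i')"
    by (simp add: less_eq_complex_def sum_nonneg)
qed

lemma unitary_diag_mat_index:
  assumes U: "U \<in> carrier_mat n n" and D: "D \<in> carrier_mat n n" "diagonal_mat D"
    and ij: "i < n" "j < n"
  shows "(U * D * mat_adjoint U) $$ (i, j) = (\<Sum>m<n. D $$ (m, m) * (U $$ (i, m) * cnj (U $$ (j, m))))"
proof -
  have "(U * D) $$ (i, l) = U $$ (i, l) * D $$ (l, l)" if l: "l < n" for l
  proof -
    have "(U * D) $$ (i, l) = (\<Sum>m<n. U $$ (i, m) * D $$ (m, l))"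
      using U D ij l by (simp add: scalar_prod_def atLeast0LessThan)
    also have "\<dots> = (\<Sum>m<n. if m = l then U $$ (i, l) * D $$ (l, l) else 0)"
      using D l by (intro sum.cong) (auto simp: diagonal_mat_def)
    finally show ?thesis
      using l by simp
  qed
  then show ?thesis
    using U D ij by (auto simp: scalar_prod_def atLeast0LessThan mult_ac intro!: sum.cong)
qed

lemma adjoint_mult_mult_diag:
  assumes U: "U \<in> carrier_mat n n" and S: "S \<in> carrier_mat n n" and m: "m < n"
  shows "(mat_adjoint U * S * U) $$ (m, m) = (\<Sum>i<n. \<Sum>j<n. cnj (col U m $ i) * S $$ (i, j) * col U m $ j)"
proof -
  have "(mat_adjoint U * S * U) $$ (m, m) = (\<Sum>j<n. (\<Sum>i<n. cnj (U $$ (i, m)) * S $$ (i, j)) * U $$ (j, m))"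
    using U S m by (auto simp: scalar_prod_def atLeast0LessThan intro!: sum.cong)
  also have "\<dots> = (\<Sum>i<n. \<Sum>j<n. cnj (U $$ (i, m)) * S $$ (i, j) * U $$ (j, m))"
    unfolding sum_distrib_right by (rule sum.swap)
  finally show ?thesis
    using U m by simp
qed

lemma pos_semidef_spectral:
  assumes S: "\<sigma> \<in> carrier_mat n n" "mat_adjoint \<sigma> = \<sigma>" and psd: "pos_semidef n \<sigma>"
  shows "\<exists>U p. unitary_mat n U \<and> (\<forall>m<n. 0 \<le> p m)
     \<and> (\<forall>i<n. \<forall>j<n. \<sigma> $$ (i, j) = (\<Sum>m<n. complex_of_real (p m) * (U $$ (i, m) * cnj (U $$ (j, m)))))
     \<and> vN_entropy \<sigma> = (\<Sum>m<n. eta (p m))"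
proof -
  obtain U D where U: "unitary_mat n U" and D: "D \<in> carrier_mat n n" "diagonal_mat D"
    and \<sigma>_eq: "\<sigma> = U * D * mat_adjoint U"
    using hermitian_spectral[OF S] by blast
  have Uc: "U \<in> carrier_mat n n" using U by (rule unitary_mat_carrier)
  have D_eq: "D = mat_adjoint U * \<sigma> * U"
  proof -
    have UD: "U * D \<in> carrier_mat n n" using Uc D by (meson mult_carrier_mat)
    have "mat_adjoint U * \<sigma> * U = mat_adjoint U * (U * D * mat_adjoint U * U)"
      unfolding \<sigma>_eq using Uc UD by (simp add: assoc_mult_mat[of _ n n _ n _ n])
    also have "U * D * mat_adjoint U * U = U * D"
      using Uc UD by (simp add: assoc_mult_mat[of _ n n _ n _ n] unitary_mat_left_inverse[OF U]
          right_mult_one_mat[OF UD])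
    also have "mat_adjoint U * (U * D) = D"
      using Uc D by (simp add: assoc_mult_mat[of _ n n _ n _ n, symmetric] unitary_mat_left_inverse[OF U])
    finally show ?thesis by simp
  qed
  define p where "p m = Re (D $$ (m, m))" for m
  have D_real: "D $$ (m, m) = complex_of_real (p m) \<and> 0 \<le> p m" if m: "m < n" for m
  proof -
    have "0 \<le> D $$ (m, m)"
      using psd col_carrier_vec[OF m Uc] unfolding D_eq adjoint_mult_mult_diag[OF Uc S(1) m]
      by (auto simp: pos_semidef_def)
    then show ?thesis
      by (auto simp: p_def less_eq_complex_def complex_eq_iff)
  qed
  have "\<sigma> $$ (i, j) = (\<Sum>m<n. complex_of_real (p m) * (U $$ (i, m) * cnj (U $$ (j, m))))"
    if "i < n" "j < n" for i j
    unfolding \<sigma>_eq unitary_diag_mat_index[OF Uc D that] using D_real by simp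
  moreover have "vN_entropy \<sigma> = (\<Sum>m<n. eta (p m))"
    using vN_entropy_similar[OF unitary_mat_similar[OF U D(1)]] vN_entropy_diagonal[OF D] \<sigma>_eq
    by (simp add: p_def)
  ultimately show ?thesis
    using U D_real by blast
qed

lemma spectral_diag:
  assumes "\<forall>i<n. \<forall>j<n. \<sigma> $$ (i, j) = (\<Sum>m<n. complex_of_real (p m) * (U $$ (i, m) * cnj (U $$ (j, m))))"
    and "i < n"
  shows "\<sigma> $$ (i, i) = complex_of_real (\<Sum>m<n. p m * (cmod (U $$ (i, m)))\<^sup>2)"
  using assms by (simp add: complex_norm_square[symmetric])

lemma sum_lessThan_length_nth: "(\<Sum>k<length L. f (L ! k)) = (\<Sum>x\<leftarrow>L. f x)"
  by (simp add: sum_list_sum_nth atLeast0LessThan)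

lemma pure_decomp_iff:
  "pure_decomp n \<rho> L \<longleftrightarrow> (\<forall>x\<in>set L. 0 \<le> fst x \<and> unit_vec_c n (snd x)) \<and> (\<Sum>x\<leftarrow>L. fst x) = 1
     \<and> \<rho> = mat n n (\<lambda>(i, j). \<Sum>x\<leftarrow>L. complex_of_real (fst x) * proj (snd x) $$ (i, j))"
proof -
  have "(\<forall>(p, \<psi>) \<in> set L. 0 \<le> p \<and> unit_vec_c n \<psi>) \<longleftrightarrow> (\<forall>x\<in>set L. 0 \<le> fst x \<and> unit_vec_c n (snd x))"
    by auto
  moreover have "(\<lambda>(i, j). \<Sum>k<length L. complex_of_real (fst (L ! k)) * proj (snd (L ! k)) $$ (i, j))
      = (\<lambda>(i, j). \<Sum>x\<leftarrow>L. complex_of_real (fst x) * proj (snd x) $$ (i, j))"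
    by (auto simp: sum_lessThan_length_nth[where f = "\<lambda>x. complex_of_real (fst x) * proj (snd x) $$ _"])
  ultimately show ?thesis
    unfolding pure_decomp_def sum_lessThan_length_nth[where f = fst] by simp
qed

lemma sum_list_map_upt_zero: "(\<Sum>m\<leftarrow>[0..<n]. f m) = (\<Sum>m<n. f m)"
  by (induction n) auto

lemma spectral_pure_decomp:
  assumes U: "unitary_mat n U" and p: "\<forall>m<n. 0 \<le> p m" and \<sigma>c: "\<sigma> \<in> carrier_mat n n"
    and \<sigma>: "\<forall>i<n. \<forall>j<n. \<sigma> $$ (i, j) = (\<Sum>m<n. complex_of_real (p m) * (U $$ (i, m) * cnj (U $$ (j, m))))"
    and tr: "(\<Sum>i<n. \<sigma> $$ (i, i)) = 1"
  shows "pure_decomp n \<sigma> (map (\<lambda>m. (p m, col U m)) [0..<n])"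
proof -
  have Uc: "U \<in> carrier_mat n n" using U by (rule unitary_mat_carrier)
  have colc: "col U m \<in> carrier_vec n" for m
    using Uc by (intro carrier_vecI) simp
  have "complex_of_real (\<Sum>m<n. p m) = complex_of_real (\<Sum>i<n. \<Sum>m<n. p m * (cmod (U $$ (i, m)))\<^sup>2)"
    by (simp add: sum.swap[of _ "{..<n}" "{..<n}"] sum_distrib_left[symmetric] unitary_mat_col_norm[OF U])
  also have "\<dots> = 1"
    using tr spectral_diag[OF \<sigma>] by simp
  finally have p_sum: "(\<Sum>m<n. p m) = 1"
    by (metis of_real_eq_1_iff)
  show ?thesis
    unfolding pure_decomp_iff
  proof (intro conjI)
    show "\<forall>x\<in>set (map (\<lambda>m. (p m, col U m)) [0..<n]). 0 \<le> fst x \<and> unit_vec_c n (snd x)"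
      using p unitary_mat_col_norm[OF U] Uc by (auto simp: unit_vec_c_def)
    show "(\<Sum>x\<leftarrow>map (\<lambda>m. (p m, col U m)) [0..<n]. fst x) = 1"
      using p_sum by (simp add: o_def sum_list_map_upt_zero)
    show "\<sigma> = mat n n (\<lambda>(i, j). \<Sum>x\<leftarrow>map (\<lambda>m. (p m, col U m)) [0..<n]. complex_of_real (fst x) * proj (snd x) $$ (i, j))"
      by (rule eq_matI) (use \<sigma> \<sigma>c Uc in \<open>auto simp: o_def sum_list_map_upt_zero proj_index[OF colc]\<close>)
  qed
qed

definition ensemble_avg :: "(complex vec \<Rightarrow> real) \<Rightarrow> (real \<times> complex vec) list \<Rightarrow> real" where
  "ensemble_avg g L = (\<Sum>x\<leftarrow>L. fst x * g (snd x))"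

lemma ensemble_avg_le:
  assumes "pure_decomp n \<rho> L" "\<And>\<psi>. unit_vec_c n \<psi> \<Longrightarrow> g \<psi> \<le> B"
  shows "ensemble_avg g L \<le> B"
proof -
  have L: "\<forall>x\<in>set L. 0 \<le> fst x \<and> unit_vec_c n (snd x)" "(\<Sum>x\<leftarrow>L. fst x) = 1"
    using assms(1) unfolding pure_decomp_iff by auto
  have "ensemble_avg g L \<le> (\<Sum>x\<leftarrow>L. fst x * B)"
    unfolding ensemble_avg_def by (rule sum_list_mono) (use L assms(2) in \<open>auto intro: mult_left_mono\<close>)
  also have "\<dots> = B"
    using L(2) by (simp add: sum_list_mult_const)
  finally show ?thesis .
qed

lemma ensemble_avg_mono:
  assumes "pure_decomp n \<rho> L" "\<And>\<psi>. unit_vec_c n \<psi> \<Longrightarrow> g \<psi> \<le> h \<psi>"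
  shows "ensemble_avg g L \<le> ensemble_avg h L"
proof -
  have "\<forall>x\<in>set L. 0 \<le> fst x \<and> unit_vec_c n (snd x)"
    using assms(1) unfolding pure_decomp_iff by auto
  then show ?thesis
    unfolding ensemble_avg_def by (intro sum_list_mono) (use assms(2) in \<open>auto intro: mult_left_mono\<close>)
qed

lemma ensemble_avg_add: "ensemble_avg (\<lambda>\<psi>. g \<psi> + h \<psi>) L = ensemble_avg g L + ensemble_avg h L"
  unfolding ensemble_avg_def by (induction L) (auto simp: algebra_simps)

definition ensemble_refine ::
  "(real \<times> complex vec) list \<Rightarrow> (real \<times> complex vec \<Rightarrow> (real \<times> complex vec) list) \<Rightarrow> (real \<times> complex vec) list"
where
  "ensemble_refine L F = concat (map (\<lambda>x. map (\<lambda>y. (fst x * fst y, snd y)) (F x)) L)"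

lemma sum_list_refine:
  "(\<Sum>z\<leftarrow>ensemble_refine L F. fst z * f (snd z)) = (\<Sum>x\<leftarrow>L. fst x * (\<Sum>y\<leftarrow>F x. fst y * f (snd y)))"
  unfolding ensemble_refine_def
  by (induction L) (simp_all add: o_def mult.assoc sum_list_const_mult)

lemma ensemble_avg_refine:
  "ensemble_avg g (ensemble_refine L F) = (\<Sum>x\<leftarrow>L. fst x * ensemble_avg g (F x))"
  unfolding ensemble_avg_def by (rule sum_list_refine)

lemma pure_decomp_refine:
  assumes L: "\<forall>x\<in>set L. 0 \<le> fst x" "(\<Sum>x\<leftarrow>L. fst x) = 1"
    and F: "\<forall>x\<in>set L. pure_decomp m (S x) (F x)"
    and \<tau>: "\<tau> = mat m m (\<lambda>(i, j). \<Sum>x\<leftarrow>L. complex_of_real (fst x) * S x $$ (i, j))"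
  shows "pure_decomp m \<tau> (ensemble_refine L F)"
proof -
  have Fx: "\<forall>y\<in>set (F x). 0 \<le> fst y \<and> unit_vec_c m (snd y)" "(\<Sum>y\<leftarrow>F x. fst y) = 1"
    "S x = mat m m (\<lambda>(i, j). \<Sum>y\<leftarrow>F x. complex_of_real (fst y) * proj (snd y) $$ (i, j))"
    if "x \<in> set L" for x
    using F that unfolding pure_decomp_iff by auto
  have "\<forall>z\<in>set (ensemble_refine L F). 0 \<le> fst z \<and> unit_vec_c m (snd z)"
    unfolding ensemble_refine_def using L(1) Fx(1) by fastforce
  moreover have "(\<Sum>z\<leftarrow>ensemble_refine L F. fst z) = 1"
    using sum_list_refine[where f = "\<lambda>_. 1" and L = L and F = F] L(2) Fx(2) by (simp cong: map_cong)
  moreover have "\<tau> = mat m m (\<lambda>(i, j). \<Sum>z\<leftarrow>ensemble_refine L F. complex_of_real (fst z) * proj (snd z) $$ (i, j))"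
  proof (rule eq_matI)
    fix i j assume "i < dim_row (mat m m (\<lambda>(i, j). \<Sum>z\<leftarrow>ensemble_refine L F. complex_of_real (fst z) * proj (snd z) $$ (i, j)))"
      "j < dim_col (mat m m (\<lambda>(i, j). \<Sum>z\<leftarrow>ensemble_refine L F. complex_of_real (fst z) * proj (snd z) $$ (i, j)))"
    then have ij: "i < m" "j < m" by auto
    have "(\<Sum>z\<leftarrow>ensemble_refine L F. complex_of_real (fst z) * proj (snd z) $$ (i, j))
        = (\<Sum>x\<leftarrow>L. complex_of_real (fst x) * (\<Sum>y\<leftarrow>F x. complex_of_real (fst y) * proj (snd y) $$ (i, j)))"
      unfolding ensemble_refine_def
      by (induction L) (simp_all add: o_def mult.assoc sum_list_const_mult)
    also have "\<dots> = (\<Sum>x\<leftarrow>L. complex_of_real (fst x) * S x $$ (i, j))"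
      using Fx(3) ij by (intro arg_cong[where f = sum_list] map_cong) auto
    finally show "\<tau> $$ (i, j) = mat m m (\<lambda>(i, j). \<Sum>z\<leftarrow>ensemble_refine L F. complex_of_real (fst z) * proj (snd z) $$ (i, j)) $$ (i, j)"
      using ij \<tau> by simp
  qed (use \<tau> in auto)
  ultimately show ?thesis
    unfolding pure_decomp_iff by simp
qed

lemma density_op_pure_decomp:
  assumes "density_op n \<rho>"
  shows "\<exists>L. pure_decomp n \<rho> L"
proof -
  note dens = assms[unfolded density_op_def]
  note \<rho> = dens[THEN conjunct1] dens[THEN conjunct2, THEN conjunct2, THEN conjunct2]
  note herm = dens[THEN conjunct2, THEN conjunct1]
  note psd = dens[THEN conjunct2, THEN conjunct2, THEN conjunct1]
  have "mat_adjoint \<rho> = \<rho>"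
  proof (rule eq_matI)
    fix i j assume "i < dim_row \<rho>" "j < dim_col \<rho>"
    then show "mat_adjoint \<rho> $$ (i, j) = \<rho> $$ (i, j)"
      using \<rho>(1) herm[rule_format, of i j] by simp
  qed (use \<rho>(1) in auto)
  then obtain U p where U: "unitary_mat n U" "\<forall>m<n. 0 \<le> p m"
    and \<rho>_eq: "\<forall>i<n. \<forall>j<n. \<rho> $$ (i, j) = (\<Sum>m<n. complex_of_real (p m) * (U $$ (i, m) * cnj (U $$ (j, m))))"
    using pos_semidef_spectral[OF \<rho>(1) _ psd[folded pos_semidef_def]] by blast
  show ?thesis
    using spectral_pure_decomp[OF U \<rho>(1) \<rho>_eq \<rho>(2)] by blast
qed

lemma ptrace_B_proj_spectral:
  assumes psi: "unit_vec_c (dA * dB) \<psi>"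
  shows "\<exists>U p. unitary_mat dA U \<and> (\<forall>m<dA. 0 \<le> p m)
    \<and> pure_decomp dA (ptrace_B dA dB (proj \<psi>)) (map (\<lambda>m. (p m, col U m)) [0..<dA])
    \<and> (\<forall>i<dA. marginal_A dB \<psi> i = (\<Sum>m<dA. p m * (cmod (U $$ (i, m)))\<^sup>2))
    \<and> vN_entropy (ptrace_A dA dB (proj \<psi>)) = (\<Sum>m<dA. eta (p m))"
proof -
  have psic: "\<psi> \<in> carrier_vec (dA * dB)" using psi by (simp add: unit_vec_c_def)
  let ?Y = "coeff_mat dA dB \<psi>" and ?s = "ptrace_B dA dB (proj \<psi>)"
  have s: "?s = ?Y * mat_adjoint ?Y" by (rule ptrace_B_proj[OF psic])
  have sc: "?s \<in> carrier_mat dA dA"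
    unfolding s using mult_carrier_mat[OF coeff_mat_carrier mat_adjoint_carrier[OF coeff_mat_carrier]] .
  have "mat_adjoint ?s = ?s"
    unfolding s using mat_adjoint_mult[OF coeff_mat_carrier mat_adjoint_carrier[OF coeff_mat_carrier]] by simp
  moreover have "pos_semidef dA ?s"
    unfolding s by (rule pos_semidef_gram[OF coeff_mat_carrier])
  ultimately obtain U p where U: "unitary_mat dA U" "\<forall>m<dA. 0 \<le> p m"
    and s_eq: "\<forall>i<dA. \<forall>j<dA. ?s $$ (i, j) = (\<Sum>m<dA. complex_of_real (p m) * (U $$ (i, m) * cnj (U $$ (j, m))))"
    and S_s: "vN_entropy ?s = (\<Sum>m<dA. eta (p m))"
    using pos_semidef_spectral[OF sc] by blast
  have "marginal_A dB \<psi> i = (\<Sum>m<dA. p m * (cmod (U $$ (i, m)))\<^sup>2)" if "i < dA" for i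
    using of_real_eq_iff[THEN iffD1, OF trans[OF ptrace_B_proj_diag[OF psic that, symmetric]
          spectral_diag[OF s_eq that]]] .
  moreover have "(\<Sum>i<dA. ?s $$ (i, i)) = 1"
    using marginal_A_sum[OF psi] by (simp add: ptrace_B_proj_diag[OF psic] flip: of_real_sum)
  then have "pure_decomp dA ?s (map (\<lambda>m. (p m, col U m)) [0..<dA])"
    by (rule spectral_pure_decomp[OF U sc s_eq])
  ultimately show ?thesis
    using U S_s vN_entropy_ptrace_A_proj[OF psic] by auto
qed

lemma vN_entropy_dephase_A_proj_le:
  assumes psi: "unit_vec_c (dA * dB) \<psi>"
  shows "\<exists>G. pure_decomp dA (ptrace_B dA dB (proj \<psi>)) G \<and>
    vN_entropy (dephase_A dA dB (proj \<psi>))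
      \<le> vN_entropy (ptrace_A dA dB (proj \<psi>)) + ensemble_avg (\<lambda>\<phi>. vN_entropy (dephase (proj \<phi>))) G"
proof -
  obtain U p where U: "unitary_mat dA U" "\<forall>m<dA. 0 \<le> p m"
    and G: "pure_decomp dA (ptrace_B dA dB (proj \<psi>)) (map (\<lambda>m. (p m, col U m)) [0..<dA])"
    and marg: "\<forall>i<dA. marginal_A dB \<psi> i = (\<Sum>m<dA. p m * (cmod (U $$ (i, m)))\<^sup>2)"
    and ent: "vN_entropy (ptrace_A dA dB (proj \<psi>)) = (\<Sum>m<dA. eta (p m))"
    using ptrace_B_proj_spectral[OF psi] by blast
  have Uc: "U \<in> carrier_mat dA dA" using U(1) by (rule unitary_mat_carrier)
  have "vN_entropy (dephase_A dA dB (proj \<psi>)) = (\<Sum>i<dA. eta (\<Sum>m<dA. p m * (cmod (U $$ (i, m)))\<^sup>2))"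
  proof -
    have "\<psi> \<in> carrier_vec (dA * dB)" using psi by (simp add: unit_vec_c_def)
    from vN_entropy_dephase_A_proj[OF this] show ?thesis
      by (simp add: marg)
  qed
  also have "\<dots> \<le> (\<Sum>m<dA. p m * (\<Sum>i<dA. eta ((cmod (U $$ (i, m)))\<^sup>2))) + (\<Sum>m<dA. eta (p m))"
    by (rule eta_mixture_le) (use U unitary_mat_col_norm in auto)
  also have "(\<Sum>m<dA. p m * (\<Sum>i<dA. eta ((cmod (U $$ (i, m)))\<^sup>2)))
      = ensemble_avg (\<lambda>\<phi>. vN_entropy (dephase (proj \<phi>))) (map (\<lambda>m. (p m, col U m)) [0..<dA])"
  proof -
    have "vN_entropy (dephase (proj (col U m))) = (\<Sum>i<dA. eta ((cmod (U $$ (i, m)))\<^sup>2))" if "m < dA" for m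
      using Uc that by (simp add: vN_entropy_dephase_proj[where n = dA] carrier_vecI)
    then show ?thesis
      unfolding ensemble_avg_def by (simp add: o_def sum_list_map_upt_zero)
  qed
  finally show ?thesis
    using G ent by (auto simp: add.commute)
qed

text \<open>The state of B conditioned on outcome i of the dephasing of A. If the marginal
  probability of i vanishes the conditional state is an arbitrary unit vector, which then
  carries weight zero.\<close>

definition cond_state :: "nat \<Rightarrow> complex vec \<Rightarrow> nat \<Rightarrow> complex vec" where
  "cond_state dB \<psi> i = (if 0 < marginal_A dB \<psi> i
     then vec dB (\<lambda>j. \<psi> $ (i * dB + j) / complex_of_real (sqrt (marginal_A dB \<psi> i)))
     else unit_vec dB 0)"

lemma cond_state_carrier: "cond_state dB \<psi> i \<in> carrier_vec dB"
  by (simp add: cond_state_def)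

lemma cond_state_scale:
  assumes "j < dB"
  shows "\<psi> $ (i * dB + j) = complex_of_real (sqrt (marginal_A dB \<psi> i)) * cond_state dB \<psi> i $ j"
proof (cases "0 < marginal_A dB \<psi> i")
  case False
  then have "marginal_A dB \<psi> i = 0"
    using marginal_A_nonneg[of dB \<psi> i] by simp
  then have "\<forall>j\<in>{..<dB}. (cmod (\<psi> $ (i * dB + j)))\<^sup>2 = 0"
    unfolding marginal_A_def by (simp add: sum_nonneg_eq_0_iff)
  then show ?thesis
    using assms \<open>marginal_A dB \<psi> i = 0\<close> by simp
qed (use assms in \<open>simp add: cond_state_def\<close>)

lemma unit_vec_cond_state:
  assumes "0 < dB"
  shows "unit_vec_c dB (cond_state dB \<psi> i)"
proof (cases "0 < marginal_A dB \<psi> i")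
  case True
  have "(\<Sum>j<dB. (cmod (\<psi> $ (i * dB + j)))\<^sup>2) = marginal_A dB \<psi> i * (\<Sum>j<dB. (cmod (cond_state dB \<psi> i $ j))\<^sup>2)"
    using True by (simp add: sum_distrib_left cond_state_scale norm_mult power_mult_distrib)
  then show ?thesis
    using True by (simp add: unit_vec_c_def cond_state_carrier marginal_A_def[symmetric])
next
  case False
  have "(\<Sum>j<dB. (cmod (cond_state dB \<psi> i $ j))\<^sup>2) = (\<Sum>j<dB. if j = 0 then 1 else 0)"
    using False by (intro sum.cong) (auto simp: cond_state_def)
  then show ?thesis
    using assms by (simp add: unit_vec_c_def cond_state_carrier)
qed

lemma ptrace_A_proj_pure_decomp:
  assumes psi: "unit_vec_c (dA * dB) \<psi>" and dB: "0 < dB"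
  shows "pure_decomp dB (ptrace_A dA dB (proj \<psi>)) (map (\<lambda>i. (marginal_A dB \<psi> i, cond_state dB \<psi> i)) [0..<dA])"
  unfolding pure_decomp_iff
proof (intro conjI)
  have psic: "\<psi> \<in> carrier_vec (dA * dB)" using psi by (simp add: unit_vec_c_def)
  show "\<forall>x\<in>set (map (\<lambda>i. (marginal_A dB \<psi> i, cond_state dB \<psi> i)) [0..<dA]). 0 \<le> fst x \<and> unit_vec_c dB (snd x)"
    using marginal_A_nonneg unit_vec_cond_state[OF dB] by auto
  show "(\<Sum>x\<leftarrow>map (\<lambda>i. (marginal_A dB \<psi> i, cond_state dB \<psi> i)) [0..<dA]. fst x) = 1"
    using marginal_A_sum[OF psi] by (simp add: o_def sum_list_map_upt_zero)
  have "\<psi> $ (i * dB + j) * cnj (\<psi> $ (i * dB + j'))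
      = complex_of_real (marginal_A dB \<psi> i) * proj (cond_state dB \<psi> i) $$ (j, j')"
    if "j < dB" "j' < dB" for i j j'
  proof -
    have "complex_of_real (sqrt (marginal_A dB \<psi> i)) * complex_of_real (sqrt (marginal_A dB \<psi> i))
        = complex_of_real (marginal_A dB \<psi> i)"
      using marginal_A_nonneg[of dB \<psi> i] by (simp flip: of_real_mult)
    then show ?thesis
      unfolding cond_state_scale[OF that(1)] cond_state_scale[OF that(2)]
      using that cond_state_carrier[of dB \<psi> i] by (simp add: mult_ac)
  qed
  then show "ptrace_A dA dB (proj \<psi>) = mat dB dB (\<lambda>(j, j').
      \<Sum>x\<leftarrow>map (\<lambda>i. (marginal_A dB \<psi> i, cond_state dB \<psi> i)) [0..<dA]. complex_of_real (fst x) * proj (snd x) $$ (j, j'))"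
    by (intro eq_matI)
      (use psic in \<open>auto simp: ptrace_A_def mult_add_less_mult o_def sum_list_map_upt_zero intro!: sum.cong\<close>)
qed

lemma vN_entropy_dephase_proj_split:
  assumes psi: "unit_vec_c (dA * dB) \<psi>"
  shows "vN_entropy (dephase (proj \<psi>)) = vN_entropy (dephase_A dA dB (proj \<psi>))
    + ensemble_avg (\<lambda>\<phi>. vN_entropy (dephase (proj \<phi>))) (map (\<lambda>i. (marginal_A dB \<psi> i, cond_state dB \<psi> i)) [0..<dA])"
proof -
  have psic: "\<psi> \<in> carrier_vec (dA * dB)" using psi by (simp add: unit_vec_c_def)
  let ?p = "marginal_A dB \<psi>" and ?\<phi> = "cond_state dB \<psi>"
  have cond_sq: "(cmod (?\<phi> i $ j))\<^sup>2 = (cmod (\<psi> $ (i * dB + j)))\<^sup>2 / ?p i" if "0 < ?p i" "j < dB" for i j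
    using that by (simp add: cond_state_scale[of j] norm_mult power_mult_distrib)
  have "vN_entropy (dephase (proj \<psi>)) = (\<Sum>i<dA. \<Sum>j<dB. eta ((cmod (\<psi> $ (i * dB + j)))\<^sup>2))"
    unfolding vN_entropy_dephase_proj[OF psic] by (rule sum_lessThan_mult)
  also have "\<dots> = (\<Sum>i<dA. eta (?p i) + ?p i * (\<Sum>j<dB. eta ((cmod (?\<phi> i $ j))\<^sup>2)))"
    by (intro sum.cong refl eta_grouping) (auto simp: marginal_A_def cond_sq)
  also have "\<dots> = vN_entropy (dephase_A dA dB (proj \<psi>))
      + ensemble_avg (\<lambda>\<phi>. vN_entropy (dephase (proj \<phi>))) (map (\<lambda>i. (?p i, ?\<phi> i)) [0..<dA])"
    by (simp add: sum.distrib vN_entropy_dephase_A_proj[OF psic] ensemble_avg_def o_def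
        sum_list_map_upt_zero vN_entropy_dephase_proj[OF cond_state_carrier])
  finally show ?thesis .
qed

section \<open>Assisted quantities\<close>

lemma sum_sum_list_swap: "(\<Sum>j\<in>J. \<Sum>x\<leftarrow>L. f j x) = (\<Sum>x\<leftarrow>L. \<Sum>j\<in>J. f j x)"
  by (induction L) (auto simp: sum.distrib)

lemma ptrace_B_pure_decomp:
  assumes "pure_decomp (dA * dB) \<rho> L"
  shows "ptrace_B dA dB \<rho>
    = mat dA dA (\<lambda>(i, j). \<Sum>x\<leftarrow>L. complex_of_real (fst x) * ptrace_B dA dB (proj (snd x)) $$ (i, j))"
proof -
  have \<rho>: "\<rho> = mat (dA * dB) (dA * dB) (\<lambda>(i, j). \<Sum>x\<leftarrow>L. complex_of_real (fst x) * proj (snd x) $$ (i, j))"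
    using assms unfolding pure_decomp_iff by blast
  show ?thesis
    by (rule eq_matI, subst \<rho>)
      (auto simp: ptrace_B_def mult_add_less_mult sum_sum_list_swap sum_distrib_left
        intro!: arg_cong[where f = sum_list])
qed

lemma ptrace_A_pure_decomp:
  assumes "pure_decomp (dA * dB) \<rho> L"
  shows "ptrace_A dA dB \<rho>
    = mat dB dB (\<lambda>(i, j). \<Sum>x\<leftarrow>L. complex_of_real (fst x) * ptrace_A dA dB (proj (snd x)) $$ (i, j))"
proof -
  have \<rho>: "\<rho> = mat (dA * dB) (dA * dB) (\<lambda>(i, j). \<Sum>x\<leftarrow>L. complex_of_real (fst x) * proj (snd x) $$ (i, j))"
    using assms unfolding pure_decomp_iff by blast
  show ?thesis
    by (rule eq_matI, subst \<rho>)
      (auto simp: ptrace_A_def mult_add_less_mult sum_sum_list_swap sum_distrib_left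
        intro!: arg_cong[where f = sum_list])
qed

text \<open>C_a, C_a^{A|B} and E_a are all of this form, for different functions g of the pure states.\<close>

definition assisted :: "nat \<Rightarrow> (complex vec \<Rightarrow> real) \<Rightarrow> complex mat \<Rightarrow> real" where
  "assisted n g \<rho> = (SUP L \<in> {L. pure_decomp n \<rho> L}. ensemble_avg g L)"

lemma coh_assist_eq_assisted:
  "coh_assist n \<rho> = assisted n (\<lambda>\<psi>. vN_entropy (dephase (proj \<psi>))) \<rho>"
  unfolding coh_assist_def assisted_def ensemble_avg_def
  using sum_lessThan_length_nth[where f = "\<lambda>x. fst x * vN_entropy (dephase (proj (snd x)))"] by simp

lemma IQ_coh_assist_eq_assisted:
  "IQ_coh_assist dA dB \<rho> = assisted (dA * dB) (\<lambda>\<psi>. vN_entropy (dephase_A dA dB (proj \<psi>))) \<rho>"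
  unfolding IQ_coh_assist_def assisted_def ensemble_avg_def
  using sum_lessThan_length_nth[where f = "\<lambda>x. fst x * vN_entropy (dephase_A dA dB (proj (snd x)))"]
  by simp

lemma ent_assist_eq_assisted:
  "ent_assist dA dB \<rho> = assisted (dA * dB) (\<lambda>\<psi>. vN_entropy (ptrace_A dA dB (proj \<psi>))) \<rho>"
  unfolding ent_assist_def assisted_def ensemble_avg_def
  using sum_lessThan_length_nth[where f = "\<lambda>x. fst x * vN_entropy (ptrace_A dA dB (proj (snd x)))"]
  by simp

lemma ensemble_avg_le_assisted:
  assumes "pure_decomp n \<rho> L" "\<And>\<psi>. unit_vec_c n \<psi> \<Longrightarrow> g \<psi> \<le> B"
  shows "ensemble_avg g L \<le> assisted n g \<rho>"
  unfolding assisted_def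
  using assms ensemble_avg_le[OF _ assms(2)] by (intro cSUP_upper bdd_aboveI[where M = B]) auto

text \<open>Refining a decomposition of rho by the decompositions provided by split yields a
  decomposition of tau rho, because tau is linear.\<close>

lemma assisted_le_add:
  assumes ne: "\<exists>L. pure_decomp n \<rho> L"
    and h: "\<And>\<psi>. unit_vec_c n \<psi> \<Longrightarrow> h \<psi> \<le> Bh" and g: "\<And>\<psi>. unit_vec_c m \<psi> \<Longrightarrow> g \<psi> \<le> Bg"
    and lin: "\<And>L. pure_decomp n \<rho> L
      \<Longrightarrow> \<tau> \<rho> = mat m m (\<lambda>(i, j). \<Sum>x\<leftarrow>L. complex_of_real (fst x) * \<tau> (proj (snd x)) $$ (i, j))"
    and split: "\<And>\<psi>. unit_vec_c n \<psi> \<Longrightarrow> \<exists>F. pure_decomp m (\<tau> (proj \<psi>)) F \<and> f \<psi> \<le> h \<psi> + ensemble_avg g F"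
  shows "assisted n f \<rho> \<le> assisted n h \<rho> + assisted m g (\<tau> \<rho>)"
proof -
  have "\<forall>\<psi>. \<exists>F. unit_vec_c n \<psi> \<longrightarrow> pure_decomp m (\<tau> (proj \<psi>)) F \<and> f \<psi> \<le> h \<psi> + ensemble_avg g F"
    using split by blast
  from choice[OF this] obtain F
    where F: "\<And>\<psi>. unit_vec_c n \<psi> \<Longrightarrow> pure_decomp m (\<tau> (proj \<psi>)) (F \<psi>) \<and> f \<psi> \<le> h \<psi> + ensemble_avg g (F \<psi>)"
    by blast
  have "ensemble_avg f L \<le> assisted n h \<rho> + assisted m g (\<tau> \<rho>)" if L: "pure_decomp n \<rho> L" for L
  proof -
    have L_set: "\<forall>x\<in>set L. 0 \<le> fst x \<and> unit_vec_c n (snd x)" "(\<Sum>x\<leftarrow>L. fst x) = 1"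
      using L unfolding pure_decomp_iff by auto
    have "pure_decomp m (\<tau> \<rho>) (ensemble_refine L (\<lambda>x. F (snd x)))"
      using L_set F by (intro pure_decomp_refine[OF _ _ _ lin[OF L]]) auto
    then have "ensemble_avg g (ensemble_refine L (\<lambda>x. F (snd x))) \<le> assisted m g (\<tau> \<rho>)"
      using g by (rule ensemble_avg_le_assisted)
    moreover have "ensemble_avg h L \<le> assisted n h \<rho>"
      using L h by (rule ensemble_avg_le_assisted)
    moreover have "ensemble_avg f L \<le> ensemble_avg (\<lambda>\<psi>. h \<psi> + ensemble_avg g (F \<psi>)) L"
      by (rule ensemble_avg_mono[OF L]) (use F in blast)
    moreover have "ensemble_avg (\<lambda>\<psi>. h \<psi> + ensemble_avg g (F \<psi>)) L
        = ensemble_avg h L + ensemble_avg g (ensemble_refine L (\<lambda>x. F (snd x)))"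
      unfolding ensemble_avg_add ensemble_avg_refine by (simp add: ensemble_avg_def)
    ultimately show ?thesis
      by linarith
  qed
  then show ?thesis
    unfolding assisted_def[of n f] using ne by (intro cSUP_least) auto
qed

theorem theorem2:
  fixes dA dB :: nat and \<rho> :: "complex mat"
  assumes "0 < dA" and "0 < dB"
    and "density_op (dA * dB) \<rho>"
  shows "IQ_coh_assist dA dB \<rho> \<le> coh_assist dA (ptrace_B dA dB \<rho>) + ent_assist dA dB \<rho>
     \<and> coh_assist (dA * dB) \<rho> \<le> IQ_coh_assist dA dB \<rho> + coh_assist dB (ptrace_A dA dB \<rho>)
     \<and> coh_assist (dA * dB) \<rho> \<le> coh_assist dA (ptrace_B dA dB \<rho>) + coh_assist dB (ptrace_A dA dB \<rho>)
                                   + ent_assist dA dB \<rho>"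
proof -
  note decomp = density_op_pure_decomp[OF assms(3)]
  have coh_bound: "vN_entropy (dephase (proj \<psi>)) \<le> real n / ln 2" if "unit_vec_c n \<psi>" for n \<psi>
    using that unfolding unit_vec_c_def by (intro vN_entropy_le dephase_proj_carrier) simp
  have IQ_bound: "vN_entropy (dephase_A dA dB (proj \<psi>)) \<le> real (dA * dB) / ln 2" for \<psi>
    by (intro vN_entropy_le) (simp add: dephase_A_def)
  have ent_bound: "vN_entropy (ptrace_A dA dB (proj \<psi>)) \<le> real dB / ln 2" for \<psi>
    by (intro vN_entropy_le) (simp add: ptrace_A_def)
  have coh_split: "\<exists>F. pure_decomp dB (ptrace_A dA dB (proj \<psi>)) F
      \<and> vN_entropy (dephase (proj \<psi>))
        \<le> vN_entropy (dephase_A dA dB (proj \<psi>)) + ensemble_avg (\<lambda>\<phi>. vN_entropy (dephase (proj \<phi>))) F"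
    if "unit_vec_c (dA * dB) \<psi>" for \<psi>
    using ptrace_A_proj_pure_decomp[OF that assms(2)] vN_entropy_dephase_proj_split[OF that] by auto
  have "IQ_coh_assist dA dB \<rho> \<le> ent_assist dA dB \<rho> + coh_assist dA (ptrace_B dA dB \<rho>)"
    unfolding IQ_coh_assist_eq_assisted ent_assist_eq_assisted coh_assist_eq_assisted
    by (rule assisted_le_add[OF decomp ent_bound coh_bound ptrace_B_pure_decomp
          vN_entropy_dephase_A_proj_le])
  moreover have "coh_assist (dA * dB) \<rho> \<le> IQ_coh_assist dA dB \<rho> + coh_assist dB (ptrace_A dA dB \<rho>)"
    unfolding IQ_coh_assist_eq_assisted coh_assist_eq_assisted
    by (rule assisted_le_add[OF decomp IQ_bound coh_bound ptrace_A_pure_decomp coh_split])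
  ultimately show ?thesis
    by linarith
qed

end
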